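(* Let $\mathbf{k}$ be a field, $Q$ a finite connected quiver, $\Lambda=\mathbf{k}Q/\mathcal{J}^2$ ($\mathcal{J}$ the arrow ideal), $n\ge2$, and assume $\mathcal{C}\subseteq\operatorname{mod}\Lambda$ is an $n$-cluster tilting subcategory. Let $v\in Q_0$. (a) If $\delta^+(v)=2$, then $\delta^-(v)\ge1$. (b) If $\delta^-(v)=2$, then $\delta^+(v)\ge1$. (c) If $\delta^-(v)=\delta^+(v)=2$, then $n=2$.
   Context: Modules are finite-dimensional right modules. $\mathcal{C}$ is $n$-cluster tilting if it is functorially finite and $\mathcal{C}=\{X\mid \operatorname{Ext}^i(X,\mathcal{C})=0\ \forall 0<i<n\}=\{X\mid\operatorname{Ext}^i(\mathcal{C},X)=0\ \forall 0<i<n\}$. $\delta^-(v)$, $\delta^+(v)$ are the numbers of arrows ending, resp. starting, at $v$. *)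

theory Defs
  imports Main
begin

text \<open>Finite-dimensional modules over the radical square zero algebra kQ/J^2, realised
  concretely as representations of the quiver Q (vertex type 'v, arrow type 'a,
  source/target maps src tgt) with every composite of two arrows acting as zero.
  The space at a vertex of dimension d is k^d, encoded as functions nat => 'k vanishing
  at indices >= d; linear maps are matrices nat => nat => 'k vanishing outside their size.\<close>

type_synonym 'k vec = "nat \<Rightarrow> 'k"
type_synonym 'k mat = "nat \<Rightarrow> nat \<Rightarrow> 'k"

definition vspace :: "nat \<Rightarrow> ('k::zero) vec set" where
  "vspace d = {x. \<forall>i. d \<le> i \<longrightarrow> x i = 0}"

definition mat_on :: "nat \<Rightarrow> nat \<Rightarrow> ('k::zero) mat \<Rightarrow> bool" where
  "mat_on r c A \<longleftrightarrow> (\<forall>i j. (r \<le> i \<or> c \<le> j) \<longrightarrow> A i j = 0)"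

definition mvec :: "nat \<Rightarrow> ('k::comm_semiring_1) mat \<Rightarrow> 'k vec \<Rightarrow> 'k vec" where
  "mvec c A x = (\<lambda>i. \<Sum>j<c. A i j * x j)"

definition mmul :: "nat \<Rightarrow> ('k::comm_semiring_1) mat \<Rightarrow> 'k mat \<Rightarrow> 'k mat" where
  "mmul m A B = (\<lambda>i k. \<Sum>j<m. A i j * B j k)"

type_synonym ('v, 'a, 'k) rep = "('v \<Rightarrow> nat) \<times> ('a \<Rightarrow> 'k mat)"
type_synonym ('v, 'k) hom = "'v \<Rightarrow> 'k mat"

definition rdim :: "('v, 'a, 'k) rep \<Rightarrow> 'v \<Rightarrow> nat" where "rdim M = fst M"
definition ract :: "('v, 'a, 'k) rep \<Rightarrow> 'a \<Rightarrow> 'k mat" where "ract M = snd M"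

definition is_rep :: "('a \<Rightarrow> 'v) \<Rightarrow> ('a \<Rightarrow> 'v) \<Rightarrow> ('v, 'a, 'k::field) rep \<Rightarrow> bool" where
  "is_rep src tgt M \<longleftrightarrow>
     (\<forall>a. mat_on (rdim M (tgt a)) (rdim M (src a)) (ract M a)) \<and>
     (\<forall>a b. tgt a = src b \<longrightarrow> mmul (rdim M (tgt a)) (ract M b) (ract M a) = (\<lambda>_ _. 0))"

definition is_hom :: "('a \<Rightarrow> 'v) \<Rightarrow> ('a \<Rightarrow> 'v) \<Rightarrow> ('v, 'a, 'k::field) rep \<Rightarrow> ('v, 'a, 'k) rep
    \<Rightarrow> ('v, 'k) hom \<Rightarrow> bool" where
  "is_hom src tgt M N f \<longleftrightarrow> is_rep src tgt M \<and> is_rep src tgt N \<and>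
     (\<forall>v. mat_on (rdim N v) (rdim M v) (f v)) \<and>
     (\<forall>a. mmul (rdim M (tgt a)) (f (tgt a)) (ract M a) =
          mmul (rdim N (src a)) (ract N a) (f (src a)))"

text \<open>Composition g o f of f : L -> M and g : M -> N (M is the middle object).\<close>
definition hcomp :: "('v, 'a, 'k::field) rep \<Rightarrow> ('v, 'k) hom \<Rightarrow> ('v, 'k) hom \<Rightarrow> ('v, 'k) hom" where
  "hcomp M g f = (\<lambda>v. mmul (rdim M v) (g v) (f v))"

definition zero_hom :: "('v, 'k::zero) hom" where
  "zero_hom = (\<lambda>v i j. 0)"

definition hom_surj :: "('v, 'a, 'k::field) rep \<Rightarrow> ('v, 'a, 'k) rep \<Rightarrow> ('v, 'k) hom \<Rightarrow> bool" where
  "hom_surj M N f \<longleftrightarrow>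
     (\<forall>v. \<forall>y\<in>vspace (rdim N v). \<exists>x\<in>vspace (rdim M v). mvec (rdim M v) (f v) x = y)"

definition exact_at :: "('v, 'a, 'k::field) rep \<Rightarrow> ('v, 'a, 'k) rep \<Rightarrow> ('v, 'k) hom \<Rightarrow> ('v, 'k) hom \<Rightarrow> bool" where
  "exact_at L M f g \<longleftrightarrow>
     (\<forall>v. \<forall>x\<in>vspace (rdim M v).
        (mvec (rdim M v) (g v) x = (\<lambda>_. 0) \<longleftrightarrow> (\<exists>y\<in>vspace (rdim L v). mvec (rdim L v) (f v) y = x)))"

definition projective :: "('a \<Rightarrow> 'v) \<Rightarrow> ('a \<Rightarrow> 'v) \<Rightarrow> ('v, 'a, 'k::field) rep \<Rightarrow> bool" where
  "projective src tgt P \<longleftrightarrow> is_rep src tgt P \<and>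
     (\<forall>X Y g h. is_hom src tgt X Y g \<and> hom_surj X Y g \<and> is_hom src tgt P Y h \<longrightarrow>
        (\<exists>h'. is_hom src tgt P X h' \<and> hcomp X g h' = h))"

definition proj_resolution :: "('a \<Rightarrow> 'v) \<Rightarrow> ('a \<Rightarrow> 'v) \<Rightarrow> ('v, 'a, 'k::field) rep
    \<Rightarrow> (nat \<Rightarrow> ('v, 'a, 'k) rep) \<Rightarrow> (nat \<Rightarrow> ('v, 'k) hom) \<Rightarrow> ('v, 'k) hom \<Rightarrow> bool" where
  "proj_resolution src tgt X P d e \<longleftrightarrow>
     (\<forall>j. projective src tgt (P j)) \<and>
     (\<forall>j. is_hom src tgt (P (Suc j)) (P j) (d j)) \<and>
     is_hom src tgt (P 0) X e \<and> hom_surj (P 0) X e \<and>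
     exact_at (P 1) (P 0) (d 0) e \<and>
     (\<forall>j. exact_at (P (Suc (Suc j))) (P (Suc j)) (d (Suc j)) (d j))"

text \<open>Ext^i(X,Y) = 0 for i >= 1: the i-th cohomology of Hom(P_\<bullet>, Y) vanishes, i.e.
  every cocycle P_i -> Y is a coboundary (for any projective resolution of X).\<close>
definition Ext_zero :: "('a \<Rightarrow> 'v) \<Rightarrow> ('a \<Rightarrow> 'v) \<Rightarrow> nat \<Rightarrow> ('v, 'a, 'k::field) rep \<Rightarrow> ('v, 'a, 'k) rep \<Rightarrow> bool" where
  "Ext_zero src tgt i X Y \<longleftrightarrow>
     (\<forall>P d e. proj_resolution src tgt X P d e \<longrightarrow>
       (\<forall>g. is_hom src tgt (P i) Y g \<and> hcomp (P i) g (d i) = zero_hom \<longrightarrow>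
          (\<exists>h. is_hom src tgt (P (i - 1)) Y h \<and> hcomp (P (i - 1)) h (d (i - 1)) = g)))"

definition contravariantly_finite :: "('a \<Rightarrow> 'v) \<Rightarrow> ('a \<Rightarrow> 'v) \<Rightarrow> ('v, 'a, 'k::field) rep set \<Rightarrow> bool" where
  "contravariantly_finite src tgt C \<longleftrightarrow>
     (\<forall>M. is_rep src tgt M \<longrightarrow> (\<exists>CM f. CM \<in> C \<and> is_hom src tgt CM M f \<and>
        (\<forall>C' g. C' \<in> C \<and> is_hom src tgt C' M g \<longrightarrow>
           (\<exists>h. is_hom src tgt C' CM h \<and> hcomp CM f h = g))))"

definition covariantly_finite :: "('a \<Rightarrow> 'v) \<Rightarrow> ('a \<Rightarrow> 'v) \<Rightarrow> ('v, 'a, 'k::field) rep set \<Rightarrow> bool" where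
  "covariantly_finite src tgt C \<longleftrightarrow>
     (\<forall>M. is_rep src tgt M \<longrightarrow> (\<exists>CM f. CM \<in> C \<and> is_hom src tgt M CM f \<and>
        (\<forall>C' g. C' \<in> C \<and> is_hom src tgt M C' g \<longrightarrow>
           (\<exists>h. is_hom src tgt CM C' h \<and> hcomp CM h f = g))))"

definition functorially_finite :: "('a \<Rightarrow> 'v) \<Rightarrow> ('a \<Rightarrow> 'v) \<Rightarrow> ('v, 'a, 'k::field) rep set \<Rightarrow> bool" where
  "functorially_finite src tgt C \<longleftrightarrow> contravariantly_finite src tgt C \<and> covariantly_finite src tgt C"

definition n_cluster_tilting :: "('a \<Rightarrow> 'v) \<Rightarrow> ('a \<Rightarrow> 'v) \<Rightarrow> nat \<Rightarrow> ('v, 'a, 'k::field) rep set \<Rightarrow> bool" where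
  "n_cluster_tilting src tgt n C \<longleftrightarrow>
     C \<subseteq> {M. is_rep src tgt M} \<and> functorially_finite src tgt C \<and>
     C = {X. is_rep src tgt X \<and> (\<forall>i. 0 < i \<and> i < n \<longrightarrow> (\<forall>Y\<in>C. Ext_zero src tgt i X Y))} \<and>
     C = {X. is_rep src tgt X \<and> (\<forall>i. 0 < i \<and> i < n \<longrightarrow> (\<forall>Y\<in>C. Ext_zero src tgt i Y X))}"

definition quiver_connected :: "('a::finite \<Rightarrow> 'v::finite) \<Rightarrow> ('a \<Rightarrow> 'v) \<Rightarrow> bool" where
  "quiver_connected src tgt \<longleftrightarrow>
     (\<forall>u w. (\<lambda>x y. \<exists>a. (src a = x \<and> tgt a = y) \<or> (src a = y \<and> tgt a = x))\<^sup>*\<^sup>* u w)"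

definition outdeg :: "('a \<Rightarrow> 'v) \<Rightarrow> 'v \<Rightarrow> nat" where
  "outdeg src v = card {a. src a = v}"

definition indeg :: "('a \<Rightarrow> 'v) \<Rightarrow> 'v \<Rightarrow> nat" where
  "indeg tgt v = card {a. tgt a = v}"

end

theory Submission
  imports Defs
begin

text \<open>Both the projective P_v and the injective I_v lie in every n-cluster tilting subcategory,
  so Ext^i(I_v, P_v) = 0 for 0 < i < n; each part exhibits a non-vanishing such Ext. Over a
  radical square zero algebra the radical of a projective is semisimple, so syzygies are
  computed by hand. (a) If no arrow ends at v, then I_v = S_v with syzygy rad P_v, and a
  map rad P_v \<rightarrow> P_v that is the identity on the summand of one arrow a1 out of v and zero on
  that of a second arrow a2 does not extend to P_v, whose endomorphisms act on rad P_v by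
  scalars: Ext^1(S_v, P_v) \<noteq> 0. (b) If no arrow starts at v, then P_v = S_v; two arrows
  b1, b2 into v make S_v a summand of the syzygy of I_v, while the projective cover of I_v
  has no summand P_v, so Ext^1(I_v, S_v) \<noteq> 0. (c) With two arrows in and two out, the
  summand S_v of the syzygy of I_v and the argument of (a) give Ext^2(I_v, P_v) \<noteq> 0, so
  n \<le> 2.\<close>

section \<open>Matrix arithmetic\<close>

lemma sum_lessThan_add: "(\<Sum>k<m+(n::nat). f k) = (\<Sum>k<m. f k) + (\<Sum>k<n. f (m+k))"
  by (induction n) (auto simp: add.assoc)

lemma sum_delta_lt: "(\<Sum>j<(r::nat). if i = j \<and> i < r then X j else 0) = (if i < r then X i else 0)"
  by (cases "i < r") (auto simp: sum.delta)

lemma sum_delta_lt': "(\<Sum>j<(r::nat). if j = i \<and> j < r then X j else 0) = (if i < r then X i else 0)"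
  by (cases "i < r") (auto simp: sum.delta')

lemma sum_delta_shift:
  "(\<Sum>k<(n::nat). if k = m + i \<and> i < r then X k else 0) = (if m + i < n \<and> i < r then X (m + i) else 0)"
  by (cases "m + i < n \<and> i < r") (auto simp: sum.delta)

lemma mat_onD: "mat_on r c A \<Longrightarrow> r \<le> i \<or> c \<le> j \<Longrightarrow> A i j = 0"
  unfolding mat_on_def by auto

lemma mmul_assoc: "mmul n (mmul m A B) C = mmul m A (mmul n B C)"
  unfolding mmul_def
  by (auto simp: sum_distrib_left sum_distrib_right mult.assoc intro!: ext sum.swap[THEN trans])

lemma mvec_mmul: "mvec m (mmul n A B) x = mvec n A (mvec m B x)"
  unfolding mmul_def mvec_def
  by (auto simp: sum_distrib_left sum_distrib_right mult.assoc intro!: ext sum.swap[THEN trans])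

lemma mat_on_mmul: "mat_on r x A \<Longrightarrow> mat_on y c B \<Longrightarrow> mat_on r c (mmul m A B)"
  unfolding mat_on_def mmul_def by auto

lemma mvec_in_vspace: "mat_on r c A \<Longrightarrow> mvec c A x \<in> vspace r"
  unfolding mat_on_def mvec_def vspace_def by auto

lemma mvec_zero_vec: "mvec c A (\<lambda>_. 0) = (\<lambda>_. 0)"
  unfolding mvec_def by simp

lemma mmul_diff_left:
  fixes A :: "('k::comm_ring_1) mat"
  shows "mmul m (\<lambda>i j. A i j - B i j) C = (\<lambda>i j. mmul m A C i j - mmul m B C i j)"
  unfolding mmul_def by (intro ext) (simp add: left_diff_distrib sum_subtractf)

lemma mmul_diff_right:
  fixes A :: "('k::comm_ring_1) mat"
  shows "mmul m C (\<lambda>i j. A i j - B i j) = (\<lambda>i j. mmul m C A i j - mmul m C B i j)"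
  unfolding mmul_def by (intro ext) (simp add: right_diff_distrib sum_subtractf)

lemma mmul_add_right: "mmul m C (\<lambda>i j. A i j + B i j) = (\<lambda>i j. mmul m C A i j + mmul m C B i j)"
  unfolding mmul_def by (auto simp: algebra_simps sum.distrib)

lemma mmul_id_left: "mat_on r c B \<Longrightarrow> mmul r (\<lambda>i j. if i = j \<and> i < r then 1 else 0) B = B"
  unfolding mmul_def mat_on_def
  by (auto intro!: ext simp: if_distrib[of "\<lambda>x. x * _"] sum_delta_lt cong: if_cong)

lemma mmul_id_right: "mat_on r c B \<Longrightarrow> mmul c B (\<lambda>i j. if i = j \<and> i < c then 1 else 0) = B"
  unfolding mmul_def mat_on_def
  by (auto intro!: ext simp: if_distrib[of "\<lambda>x. _ * x"] sum.delta' cong: if_cong)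

section \<open>The category of representations\<close>

definition hom_id :: "('v, 'a, 'k::field) rep \<Rightarrow> ('v, 'k) hom" where
  "hom_id M = (\<lambda>v i j. if i = j \<and> i < rdim M v then 1 else 0)"

definition hom_diff :: "('v, 'k::field) hom \<Rightarrow> ('v, 'k) hom \<Rightarrow> ('v, 'k) hom" where
  "hom_diff f g = (\<lambda>v i j. f v i j - g v i j)"

definition hom_add :: "('v, 'k::field) hom \<Rightarrow> ('v, 'k) hom \<Rightarrow> ('v, 'k) hom" where
  "hom_add f g = (\<lambda>v i j. f v i j + g v i j)"

lemma is_repD:
  assumes "is_rep src tgt M"
  shows "\<And>a. mat_on (rdim M (tgt a)) (rdim M (src a)) (ract M a)"
    "\<And>a b. tgt a = src b \<Longrightarrow> mmul (rdim M (tgt a)) (ract M b) (ract M a) = (\<lambda>_ _. 0)"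
  using assms unfolding is_rep_def by auto

lemma is_homD:
  assumes "is_hom src tgt M N f"
  shows "is_rep src tgt M" "is_rep src tgt N" "\<And>v. mat_on (rdim N v) (rdim M v) (f v)"
    "\<And>a. mmul (rdim M (tgt a)) (f (tgt a)) (ract M a) = mmul (rdim N (src a)) (ract N a) (f (src a))"
  using assms unfolding is_hom_def by auto

lemma hcomp_assoc: "hcomp M (hcomp N h g) f = hcomp N h (hcomp M g f)"
  unfolding hcomp_def by (simp add: mmul_assoc)

lemma mvec_hcomp: "mvec (rdim L v) (hcomp M g f v) x = mvec (rdim M v) (g v) (mvec (rdim L v) (f v) x)"
  unfolding hcomp_def by (simp add: mvec_mmul)

lemma hcomp_diff_left: "hcomp M (hom_diff g g') f = hom_diff (hcomp M g f) (hcomp M g' f)"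
  unfolding hcomp_def hom_diff_def by (simp add: mmul_diff_left)

lemma hcomp_diff_right: "hcomp M g (hom_diff f f') = hom_diff (hcomp M g f) (hcomp M g f')"
  unfolding hcomp_def hom_diff_def by (simp add: mmul_diff_right)

lemma hcomp_add_right: "hcomp M g (hom_add f f') = hom_add (hcomp M g f) (hcomp M g f')"
  unfolding hcomp_def hom_add_def by (simp add: mmul_add_right)

lemma hcomp_zero_left: "hcomp M zero_hom f = zero_hom"
  unfolding hcomp_def zero_hom_def mmul_def by simp

lemma hcomp_zero_right: "hcomp M f zero_hom = zero_hom"
  unfolding hcomp_def zero_hom_def mmul_def by simp

lemma hom_diff_self: "hom_diff f f = zero_hom"
  unfolding hom_diff_def zero_hom_def by simp

lemma hom_diff_zero: "hom_diff f zero_hom = f"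
  unfolding hom_diff_def zero_hom_def by simp

lemma hom_add_zero: "hom_add f zero_hom = f"
  unfolding hom_add_def zero_hom_def by simp

lemma hcomp_id_left: "is_hom src tgt M N f \<Longrightarrow> hcomp N (hom_id N) f = f"
  unfolding hcomp_def hom_id_def by (rule ext, rule mmul_id_left, erule is_homD)

lemma hcomp_id_right: "is_hom src tgt M N f \<Longrightarrow> hcomp M f (hom_id M) = f"
  unfolding hcomp_def hom_id_def by (rule ext, rule mmul_id_right, erule is_homD)

lemma is_hom_id: "is_rep src tgt M \<Longrightarrow> is_hom src tgt M M (hom_id M)"
  unfolding is_hom_def hom_id_def
proof (intro conjI allI)
  fix a assume "is_rep src tgt M"
  then have m: "mat_on (rdim M (tgt a)) (rdim M (src a)) (ract M a)" by (rule is_repD)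
  show "mmul (rdim M (tgt a)) (\<lambda>i j. if i = j \<and> i < rdim M (tgt a) then 1 else 0) (ract M a) =
        mmul (rdim M (src a)) (ract M a) (\<lambda>i j. if i = j \<and> i < rdim M (src a) then 1 else 0)"
    unfolding mmul_id_left[OF m] mmul_id_right[OF m] ..
qed (auto simp: mat_on_def)

lemma is_hom_comp:
  assumes f: "is_hom src tgt L M f" and g: "is_hom src tgt M N g"
  shows "is_hom src tgt L N (hcomp M g f)"
  unfolding is_hom_def
proof (intro conjI allI)
  show "is_rep src tgt L" "is_rep src tgt N" using f g by (auto dest: is_homD)
  fix v show "mat_on (rdim N v) (rdim L v) (hcomp M g f v)"
    unfolding hcomp_def using is_homD(3)[OF g] is_homD(3)[OF f] by (rule mat_on_mmul)
next
  fix a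
  have "mmul (rdim L (tgt a)) (hcomp M g f (tgt a)) (ract L a)
      = mmul (rdim M (tgt a)) (g (tgt a)) (mmul (rdim L (tgt a)) (f (tgt a)) (ract L a))"
    unfolding hcomp_def by (simp add: mmul_assoc)
  also have "\<dots> = mmul (rdim M (src a)) (mmul (rdim M (tgt a)) (g (tgt a)) (ract M a)) (f (src a))"
    unfolding is_homD(4)[OF f] by (simp add: mmul_assoc)
  also have "\<dots> = mmul (rdim N (src a)) (ract N a) (hcomp M g f (src a))"
    unfolding is_homD(4)[OF g] hcomp_def by (simp add: mmul_assoc)
  finally show "mmul (rdim L (tgt a)) (hcomp M g f (tgt a)) (ract L a) =
      mmul (rdim N (src a)) (ract N a) (hcomp M g f (src a))" .
qed

lemma is_hom_diff:
  assumes f: "is_hom src tgt M N f" and g: "is_hom src tgt M N g"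
  shows "is_hom src tgt M N (hom_diff f g)"
  using f g unfolding is_hom_def hom_diff_def
  by (auto simp: mmul_diff_left mmul_diff_right mat_on_def)

lemma hcomp_zero_if_image_killed:
  fixes f g :: "('v, 'k::field) hom" and M L :: "('v, 'a, 'k) rep"
  assumes f: "\<And>v. mat_on (rdim M v) (rdim L v) (f v)"
    and z: "\<And>v y. y \<in> vspace (rdim L v) \<Longrightarrow> mvec (rdim M v) (g v) (mvec (rdim L v) (f v) y) = (\<lambda>_. 0)"
  shows "hcomp M g f = zero_hom"
proof (intro ext)
  fix v i c
  show "hcomp M g f v i c = zero_hom v i c"
  proof (cases "c < rdim L v")
    case True
    define y where "y = (\<lambda>k. if k = c then 1 else (0::'k))"
    have y: "y \<in> vspace (rdim L v)" using True unfolding y_def vspace_def by auto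
    have col: "mvec (rdim L v) (f v) y = (\<lambda>k. f v k c)"
      unfolding mvec_def y_def using True
      by (auto simp: if_distrib[of "\<lambda>x. _ * x"] sum.delta' cong: if_cong)
    have "hcomp M g f v i c = mvec (rdim M v) (g v) (\<lambda>k. f v k c) i"
      unfolding hcomp_def mmul_def mvec_def by simp
    then have "hcomp M g f v i c = mvec (rdim M v) (g v) (mvec (rdim L v) (f v) y) i"
      using col by simp
    then show ?thesis using z[OF y] unfolding zero_hom_def by simp
  next
    case False
    then show ?thesis using f[of v] unfolding hcomp_def mmul_def zero_hom_def mat_on_def by auto
  qed
qed

lemma exact_at_hcomp_zero:
  fixes f g :: "('v, 'k::field) hom" and M L :: "('v, 'a, 'k) rep"
  assumes f: "is_hom src tgt L M f" and ex: "exact_at L M f g"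
  shows "hcomp M g f = zero_hom"
proof (rule hcomp_zero_if_image_killed)
  show "\<And>v. mat_on (rdim M v) (rdim L v) (f v)" using f by (rule is_homD)
  fix v and y :: "'k vec" assume y: "y \<in> vspace (rdim L v)"
  have "mvec (rdim L v) (f v) y \<in> vspace (rdim M v)" using is_homD(3)[OF f] by (rule mvec_in_vspace)
  then show "mvec (rdim M v) (g v) (mvec (rdim L v) (f v) y) = (\<lambda>_. 0)"
    using ex y unfolding exact_at_def by blast
qed

definition rep_sum :: "('a \<Rightarrow> 'v) \<Rightarrow> ('a \<Rightarrow> 'v) \<Rightarrow> ('v, 'a, 'k::field) rep \<Rightarrow> ('v, 'a, 'k) rep \<Rightarrow> ('v, 'a, 'k) rep" where
  "rep_sum src tgt M N = (\<lambda>v. rdim M v + rdim N v,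
     \<lambda>a i j. if i < rdim M (tgt a) then (if j < rdim M (src a) then ract M a i j else 0)
            else (if j < rdim M (src a) then 0 else ract N a (i - rdim M (tgt a)) (j - rdim M (src a))))"

lemma rdim_rep_sum[simp]: "rdim (rep_sum src tgt M N) v = rdim M v + rdim N v"
  unfolding rep_sum_def rdim_def by simp

lemma ract_rep_sum: "ract (rep_sum src tgt M N) a = (\<lambda>i j.
     if i < rdim M (tgt a) then (if j < rdim M (src a) then ract M a i j else 0)
     else (if j < rdim M (src a) then 0 else ract N a (i - rdim M (tgt a)) (j - rdim M (src a))))"
  unfolding rep_sum_def ract_def by simp

definition copair :: "('v, 'a, 'k::field) rep \<Rightarrow> ('v, 'k) hom \<Rightarrow> ('v, 'k) hom \<Rightarrow> ('v, 'k) hom" where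
  "copair M f g = (\<lambda>v i j. if j < rdim M v then f v i j else g v i (j - rdim M v))"

definition proj_right :: "('v, 'a, 'k::field) rep \<Rightarrow> ('v, 'a, 'k) rep \<Rightarrow> ('v, 'k) hom" where
  "proj_right M N = (\<lambda>v i j. if j = rdim M v + i \<and> i < rdim N v then 1 else 0)"

lemma mmul_rep_sum_act:
  "mmul (rdim (rep_sum src tgt M N) (tgt a)) B (ract (rep_sum src tgt M N) a) i j =
     (if j < rdim M (src a)
      then mmul (rdim M (tgt a)) B (ract M a) i j
      else mmul (rdim N (tgt a)) (\<lambda>i k. B i (rdim M (tgt a) + k)) (ract N a) i (j - rdim M (src a)))"
  unfolding mmul_def rdim_rep_sum sum_lessThan_add ract_rep_sum by simp

lemma is_rep_sum:
  assumes M: "is_rep src tgt M" and N: "is_rep src tgt N"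
  shows "is_rep src tgt (rep_sum src tgt M N)"
  unfolding is_rep_def
proof (intro conjI allI impI)
  fix a
  show "mat_on (rdim (rep_sum src tgt M N) (tgt a)) (rdim (rep_sum src tgt M N) (src a)) (ract (rep_sum src tgt M N) a)"
    using is_repD(1)[OF M, of a] is_repD(1)[OF N, of a]
    unfolding mat_on_def ract_rep_sum by auto
next
  fix a b assume ab: "tgt a = src b"
  have mM: "mmul (rdim M (tgt a)) (ract M b) (ract M a) = (\<lambda>_ _. 0)" using is_repD(2)[OF M ab] .
  have mN: "mmul (rdim N (tgt a)) (ract N b) (ract N a) = (\<lambda>_ _. 0)" using is_repD(2)[OF N ab] .
  show "mmul (rdim (rep_sum src tgt M N) (tgt a)) (ract (rep_sum src tgt M N) b) (ract (rep_sum src tgt M N) a) = (\<lambda>_ _. 0)"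
  proof (intro ext)
    fix i j
    have "mmul (rdim (rep_sum src tgt M N) (tgt a)) (ract (rep_sum src tgt M N) b) (ract (rep_sum src tgt M N) a) i j
      = (\<Sum>k<rdim M (tgt a). ract (rep_sum src tgt M N) b i k * ract (rep_sum src tgt M N) a k j)
        + (\<Sum>k<rdim N (tgt a). ract (rep_sum src tgt M N) b i (rdim M (tgt a) + k) * ract (rep_sum src tgt M N) a (rdim M (tgt a) + k) j)"
      unfolding mmul_def by (simp add: sum_lessThan_add)
    also have "\<dots> = 0"
    proof -
      have s1: "(\<Sum>k<rdim M (tgt a). ract (rep_sum src tgt M N) b i k * ract (rep_sum src tgt M N) a k j)
          = (if i < rdim M (tgt b) \<and> j < rdim M (src a) then mmul (rdim M (tgt a)) (ract M b) (ract M a) i j else 0)"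
        unfolding mmul_def ract_rep_sum using ab by (cases "i < rdim M (tgt b)"; cases "j < rdim M (src a)"; simp)
      have s2: "(\<Sum>k<rdim N (tgt a). ract (rep_sum src tgt M N) b i (rdim M (tgt a) + k) * ract (rep_sum src tgt M N) a (rdim M (tgt a) + k) j)
          = (if \<not> i < rdim M (tgt b) \<and> \<not> j < rdim M (src a) then mmul (rdim N (tgt a)) (ract N b) (ract N a) (i - rdim M (tgt b)) (j - rdim M (src a)) else 0)"
        unfolding mmul_def ract_rep_sum using ab by (cases "i < rdim M (tgt b)"; cases "j < rdim M (src a)"; simp)
      show ?thesis unfolding s1 s2 using mM mN by simp
    qed
    finally show "mmul (rdim (rep_sum src tgt M N) (tgt a)) (ract (rep_sum src tgt M N) b) (ract (rep_sum src tgt M N) a) i j = 0" .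
  qed
qed

lemma is_hom_copair:
  assumes f: "is_hom src tgt M Z f" and g: "is_hom src tgt N Z g"
  shows "is_hom src tgt (rep_sum src tgt M N) Z (copair M f g)"
  unfolding is_hom_def
proof (intro conjI allI)
  show "is_rep src tgt (rep_sum src tgt M N)" using f g by (auto intro: is_rep_sum dest: is_homD)
  show "is_rep src tgt Z" using f by (auto dest: is_homD)
  fix v show "mat_on (rdim Z v) (rdim (rep_sum src tgt M N) v) (copair M f g v)"
    using is_homD(3)[OF f, of v] is_homD(3)[OF g, of v] unfolding mat_on_def copair_def by auto
next
  fix a
  have "mmul (rdim (rep_sum src tgt M N) (tgt a)) (copair M f g (tgt a)) (ract (rep_sum src tgt M N) a) i j =
        mmul (rdim Z (src a)) (ract Z a) (copair M f g (src a)) i j" for i j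
    using fun_cong[OF fun_cong[OF is_homD(4)[OF f, of a]]] fun_cong[OF fun_cong[OF is_homD(4)[OF g, of a]]]
    unfolding mmul_rep_sum_act by (auto simp: copair_def mmul_def)
  then show "mmul (rdim (rep_sum src tgt M N) (tgt a)) (copair M f g (tgt a)) (ract (rep_sum src tgt M N) a) =
        mmul (rdim Z (src a)) (ract Z a) (copair M f g (src a))" by blast
qed

text \<open>Truncating the identity of M gives the projection M \<oplus> N \<rightarrow> M.\<close>

lemma is_hom_proj_left:
  assumes M: "is_rep src tgt M" and N: "is_rep src tgt N"
  shows "is_hom src tgt (rep_sum src tgt M N) M (hom_id M)"
  unfolding is_hom_def
proof (intro conjI allI)
  show "is_rep src tgt (rep_sum src tgt M N)" using M N by (rule is_rep_sum)
  show "is_rep src tgt M" by fact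
  fix v show "mat_on (rdim M v) (rdim (rep_sum src tgt M N) v) (hom_id M v)"
    unfolding mat_on_def hom_id_def by auto
next
  fix a
  have mo: "mat_on (rdim M (tgt a)) (rdim M (src a)) (ract M a)" using is_repD(1)[OF M] .
  show "mmul (rdim (rep_sum src tgt M N) (tgt a)) (hom_id M (tgt a)) (ract (rep_sum src tgt M N) a) =
        mmul (rdim M (src a)) (ract M a) (hom_id M (src a))"
  proof (intro ext)
    fix i j
    have "mmul (rdim (rep_sum src tgt M N) (tgt a)) (hom_id M (tgt a)) (ract (rep_sum src tgt M N) a) i j
        = (if i < rdim M (tgt a) \<and> j < rdim M (src a) then ract M a i j else 0)"
      unfolding mmul_def hom_id_def ract_rep_sum rdim_rep_sum
      by (simp add: if_distrib[of "\<lambda>x. x * _"] sum_delta_lt cong: if_cong)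
    also have "\<dots> = mmul (rdim M (src a)) (ract M a) (hom_id M (src a)) i j"
      unfolding mmul_def hom_id_def using mo
      by (auto simp: if_distrib[of "\<lambda>x. _ * x"] sum_delta_lt' mat_on_def cong: if_cong)
    finally show "mmul (rdim (rep_sum src tgt M N) (tgt a)) (hom_id M (tgt a)) (ract (rep_sum src tgt M N) a) i j =
        mmul (rdim M (src a)) (ract M a) (hom_id M (src a)) i j" .
  qed
qed

lemma hcomp_copair:
  "hcomp (rep_sum src tgt M N) (copair M f g) t =
   hom_add (hcomp M f (hcomp (rep_sum src tgt M N) (hom_id M) t)) (hcomp N g (hcomp (rep_sum src tgt M N) (proj_right M N) t))"
proof (intro ext)
  fix v i j
  have 1: "hcomp (rep_sum src tgt M N) (hom_id M) t v k j = (if k < rdim M v then t v k j else 0)" for k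
    unfolding hcomp_def mmul_def hom_id_def rdim_rep_sum
    by (auto simp: if_distrib[of "\<lambda>x. x * _"] sum_delta_lt cong: if_cong)
  have 2: "hcomp (rep_sum src tgt M N) (proj_right M N) t v k j = (if k < rdim N v then t v (rdim M v + k) j else 0)" for k
    unfolding hcomp_def mmul_def proj_right_def rdim_rep_sum
    by (auto simp: if_distrib[of "\<lambda>x. x * _"] sum_delta_shift cong: if_cong)
  show "hcomp (rep_sum src tgt M N) (copair M f g) t v i j = hom_add (hcomp M f (hcomp (rep_sum src tgt M N) (hom_id M) t))
      (hcomp N g (hcomp (rep_sum src tgt M N) (proj_right M N) t)) v i j"
    unfolding hom_add_def hcomp_def[of M f] hcomp_def[of N g] mmul_def 1 2
    by (simp add: hcomp_def mmul_def sum_lessThan_add copair_def cong: if_cong)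
qed

lemma hom_surj_copair:
  fixes f g :: "('v, 'k::field) hom" and M N Z :: "('v, 'a, 'k) rep"
  assumes "\<And>v y. y \<in> vspace (rdim Z v) \<Longrightarrow> \<exists>x1\<in>vspace (rdim M v). \<exists>x2\<in>vspace (rdim N v).
              (\<lambda>i. mvec (rdim M v) (f v) x1 i + mvec (rdim N v) (g v) x2 i) = y"
  shows "hom_surj (rep_sum src tgt M N) Z (copair M f g)"
  unfolding hom_surj_def
proof (intro allI ballI)
  fix v and y :: "'k vec" assume y: "y \<in> vspace (rdim Z v)"
  obtain x1 x2 where x1: "x1 \<in> vspace (rdim M v)" and x2: "x2 \<in> vspace (rdim N v)"
    and e: "(\<lambda>i. mvec (rdim M v) (f v) x1 i + mvec (rdim N v) (g v) x2 i) = y"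
    using assms[OF y] by blast
  define x where "x = (\<lambda>k. if k < rdim M v then x1 k else x2 (k - rdim M v))"
  have "x \<in> vspace (rdim (rep_sum src tgt M N) v)"
    using x2 unfolding x_def vspace_def by auto
  moreover have "mvec (rdim (rep_sum src tgt M N) v) (copair M f g v) x = y"
    unfolding e[symmetric] mvec_def rdim_rep_sum sum_lessThan_add x_def copair_def by simp
  ultimately show "\<exists>x\<in>vspace (rdim (rep_sum src tgt M N) v). mvec (rdim (rep_sum src tgt M N) v) (copair M f g v) x = y"
    by blast
qed

lemma hom_surj_copair_exact:
  fixes D0 D1 S :: "('v, 'k::field) hom" and A B Q :: "('v, 'a, 'k) rep"
  assumes D0: "is_hom src tgt B A D0" and S: "is_hom src tgt A B S"
    and ex: "\<And>v x. x \<in> vspace (rdim B v) \<Longrightarrow> mvec (rdim B v) (D0 v) x = (\<lambda>_. 0) \<Longrightarrow>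
               \<exists>y\<in>vspace (rdim Q v). mvec (rdim Q v) (D1 v) y = x"
    and DSD: "hcomp B D0 (hcomp A S D0) = D0"
  shows "hom_surj (rep_sum src tgt Q A) B (copair Q D1 S)"
proof (rule hom_surj_copair)
  fix v and y :: "'k vec" assume y: "y \<in> vspace (rdim B v)"
  define x2 where "x2 = mvec (rdim B v) (D0 v) y"
  have x2: "x2 \<in> vspace (rdim A v)" unfolding x2_def using is_homD(3)[OF D0] by (rule mvec_in_vspace)
  define py where "py = (\<lambda>i. y i - mvec (rdim A v) (S v) x2 i)"
  have py: "py \<in> vspace (rdim B v)" using y mvec_in_vspace[OF is_homD(3)[OF S], of v x2]
    unfolding py_def vspace_def by auto
  have "mvec (rdim B v) (D0 v) py = (\<lambda>i. mvec (rdim B v) (D0 v) y i - mvec (rdim B v) (D0 v) (mvec (rdim A v) (S v) x2) i)"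
    unfolding py_def mvec_def by (auto simp: algebra_simps sum_subtractf)
  also have "mvec (rdim B v) (D0 v) (mvec (rdim A v) (S v) x2) = mvec (rdim B v) (hcomp B D0 (hcomp A S D0) v) y"
    unfolding x2_def mvec_hcomp ..
  finally have "mvec (rdim B v) (D0 v) py = (\<lambda>_. 0)" unfolding DSD by simp
  then obtain x1 where x1: "x1 \<in> vspace (rdim Q v)" and e1: "mvec (rdim Q v) (D1 v) x1 = py"
    using ex[OF py] by blast
  show "\<exists>x1\<in>vspace (rdim Q v). \<exists>x2\<in>vspace (rdim A v).
            (\<lambda>i. mvec (rdim Q v) (D1 v) x1 i + mvec (rdim A v) (S v) x2 i) = y"
    using x1 x2 e1 unfolding py_def by (intro bexI[of _ x1] bexI[of _ x2]) auto
qed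

text \<open>\<pi> = 1 - S D0 is an idempotent of B with image ker D0 = im D1. Lifting it along the
  surjection [D1, S] : Q \<oplus> A \<rightarrow> B and composing with \<pi> gives the next homotopy S'.\<close>

lemma homotopy_projector:
  fixes D0 D1 S :: "('v, 'k::field) hom" and A B Q :: "('v, 'a, 'k) rep"
  assumes D0: "is_hom src tgt B A D0" and D1: "is_hom src tgt Q B D1" and S: "is_hom src tgt A B S"
    and DD: "hcomp B D0 D1 = zero_hom"
    and DSD: "hcomp B D0 (hcomp A S D0) = D0"
    and SDS: "hcomp A S (hcomp B D0 S) = S"
  defines "\<pi> \<equiv> hom_diff (hom_id B) (hcomp A S D0)"
  shows "is_hom src tgt B B \<pi>" "hcomp B \<pi> \<pi> = \<pi>" "hcomp B \<pi> D1 = D1" "hcomp B \<pi> S = zero_hom"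
proof -
  define SD where "SD = hcomp A S D0"
  have SDh: "is_hom src tgt B B SD" unfolding SD_def using D0 S by (rule is_hom_comp)
  have repB: "is_rep src tgt B" using D0 by (rule is_homD)
  show pih: "is_hom src tgt B B \<pi>" unfolding \<pi>_def SD_def[symmetric] by (rule is_hom_diff[OF is_hom_id[OF repB] SDh])
  have SDSD: "hcomp B SD SD = SD" unfolding SD_def by (simp add: hcomp_assoc DSD)
  have "hcomp B \<pi> \<pi> = hom_diff \<pi> (hcomp B SD \<pi>)"
    unfolding \<pi>_def SD_def[symmetric] hcomp_diff_left by (subst hcomp_id_left[OF pih[unfolded \<pi>_def SD_def[symmetric]]]) simp
  also have "hcomp B SD \<pi> = zero_hom"
    unfolding \<pi>_def SD_def[symmetric] hcomp_diff_right hcomp_id_right[OF SDh] SDSD hom_diff_self ..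
  finally show "hcomp B \<pi> \<pi> = \<pi>" by (simp add: hom_diff_zero)
  show "hcomp B \<pi> D1 = D1"
    unfolding \<pi>_def hcomp_diff_left hcomp_id_left[OF D1] hcomp_assoc DD hcomp_zero_right hom_diff_zero ..
  show "hcomp B \<pi> S = zero_hom"
    unfolding \<pi>_def hcomp_diff_left hcomp_id_left[OF S] hcomp_assoc SDS hom_diff_self ..
qed

lemma contracting_homotopy_step:
  fixes D0 D1 S :: "('v, 'k::field) hom" and A B Q :: "('v, 'a, 'k) rep"
  assumes projB: "projective src tgt B"
    and D0: "is_hom src tgt B A D0" and D1: "is_hom src tgt Q B D1" and S: "is_hom src tgt A B S"
    and DD: "hcomp B D0 D1 = zero_hom"
    and ex: "\<And>v x. x \<in> vspace (rdim B v) \<Longrightarrow> mvec (rdim B v) (D0 v) x = (\<lambda>_. 0) \<Longrightarrow>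
               \<exists>y\<in>vspace (rdim Q v). mvec (rdim Q v) (D1 v) y = x"
    and DSD: "hcomp B D0 (hcomp A S D0) = D0"
    and SDS: "hcomp A S (hcomp B D0 S) = S"
  shows "\<exists>S'. is_hom src tgt B Q S' \<and> hcomp Q D1 S' = hom_diff (hom_id B) (hcomp A S D0) \<and>
     hcomp Q D1 (hcomp B S' D1) = D1 \<and> hcomp B S' (hcomp Q D1 S') = S'"
proof -
  define \<pi> where "\<pi> = hom_diff (hom_id B) (hcomp A S D0)"
  note \<pi> = homotopy_projector[OF D0 D1 S DD DSD SDS, folded \<pi>_def]
  have repA: "is_rep src tgt A" and repQ: "is_rep src tgt Q" using D0 D1 by (auto dest: is_homD)
  obtain t where t: "is_hom src tgt B (rep_sum src tgt Q A) t"
    and tt: "hcomp (rep_sum src tgt Q A) (copair Q D1 S) t = \<pi>"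
    using projB is_hom_copair[OF D1 S] hom_surj_copair_exact[OF D0 S ex DSD] \<pi>(1)
    unfolding projective_def by blast
  define t1 where "t1 = hcomp (rep_sum src tgt Q A) (hom_id Q) t"
  define t2 where "t2 = hcomp (rep_sum src tgt Q A) (proj_right Q A) t"
  have t1h: "is_hom src tgt B Q t1" unfolding t1_def using t is_hom_proj_left[OF repQ repA] by (rule is_hom_comp)
  have dec: "\<pi> = hom_add (hcomp Q D1 t1) (hcomp A S t2)"
    unfolding tt[symmetric] t1_def t2_def by (rule hcomp_copair)
  have key: "hcomp Q D1 t1 = \<pi>"
  proof -
    have "\<pi> = hcomp B \<pi> \<pi>" using \<pi>(2) by simp
    also have "\<dots> = hom_add (hcomp Q (hcomp B \<pi> D1) t1) (hcomp A (hcomp B \<pi> S) t2)"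
      by (subst (2) dec) (simp add: hcomp_add_right hcomp_assoc)
    also have "\<dots> = hcomp Q D1 t1" unfolding \<pi>(3,4) hcomp_zero_left hom_add_zero ..
    finally show ?thesis by simp
  qed
  define S' where "S' = hcomp B t1 \<pi>"
  have S'h: "is_hom src tgt B Q S'" unfolding S'_def using \<pi>(1) t1h by (rule is_hom_comp)
  have 1: "hcomp Q D1 S' = \<pi>" unfolding S'_def hcomp_assoc[symmetric] key \<pi>(2) ..
  have 2: "hcomp Q D1 (hcomp B S' D1) = D1" unfolding hcomp_assoc[symmetric] 1 \<pi>(3) ..
  have 3: "hcomp B S' (hcomp Q D1 S') = S'" unfolding 1 unfolding S'_def hcomp_assoc \<pi>(2) ..
  show ?thesis using S'h 1 2 3 unfolding \<pi>_def by blast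
qed

definition aug_obj :: "('v, 'a, 'k::field) rep \<Rightarrow> (nat \<Rightarrow> ('v, 'a, 'k) rep) \<Rightarrow> nat \<Rightarrow> ('v, 'a, 'k) rep" where
  "aug_obj X P j = (case j of 0 \<Rightarrow> X | Suc j' \<Rightarrow> P j')"

definition aug_diff :: "('v, 'k::field) hom \<Rightarrow> (nat \<Rightarrow> ('v, 'k) hom) \<Rightarrow> nat \<Rightarrow> ('v, 'k) hom" where
  "aug_diff e d j = (case j of 0 \<Rightarrow> e | Suc j' \<Rightarrow> d j')"

lemma aug_obj_simps[simp]: "aug_obj X P 0 = X" "aug_obj X P (Suc j) = P j"
  unfolding aug_obj_def by simp_all

lemma aug_diff_simps[simp]: "aug_diff e d 0 = e" "aug_diff e d (Suc j) = d j"
  unfolding aug_diff_def by simp_all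

lemma aug_resolution:
  fixes X :: "('v, 'a, 'k::field) rep"
  assumes X: "projective src tgt X" and R: "proj_resolution src tgt X P d e"
  shows "projective src tgt (aug_obj X P j)"
    and "is_hom src tgt (aug_obj X P (Suc j)) (aug_obj X P j) (aug_diff e d j)"
    and "hcomp (aug_obj X P (Suc j)) (aug_diff e d j) (aug_diff e d (Suc j)) = zero_hom"
    and "\<And>v x. x \<in> vspace (rdim (aug_obj X P (Suc j)) v) \<Longrightarrow> mvec (rdim (aug_obj X P (Suc j)) v) (aug_diff e d j v) x = (\<lambda>_. 0) \<Longrightarrow>
          \<exists>y\<in>vspace (rdim (aug_obj X P (Suc (Suc j))) v). mvec (rdim (aug_obj X P (Suc (Suc j))) v) (aug_diff e d (Suc j) v) y = x"
proof -
  have ex: "exact_at (aug_obj X P (Suc (Suc j))) (aug_obj X P (Suc j)) (aug_diff e d (Suc j)) (aug_diff e d j)"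
    using R unfolding proj_resolution_def by (cases j) auto
  show "projective src tgt (aug_obj X P j)" using X R unfolding proj_resolution_def by (cases j) auto
  show h: "is_hom src tgt (aug_obj X P (Suc j)) (aug_obj X P j) (aug_diff e d j)" for j
    using R unfolding proj_resolution_def by (cases j) auto
  show "hcomp (aug_obj X P (Suc j)) (aug_diff e d j) (aug_diff e d (Suc j)) = zero_hom"
    using exact_at_hcomp_zero[OF h ex] .
  fix v x assume "x \<in> vspace (rdim (aug_obj X P (Suc j)) v)" "mvec (rdim (aug_obj X P (Suc j)) v) (aug_diff e d j v) x = (\<lambda>_. 0)"
  then show "\<exists>y\<in>vspace (rdim (aug_obj X P (Suc (Suc j))) v). mvec (rdim (aug_obj X P (Suc (Suc j))) v) (aug_diff e d (Suc j) v) y = x"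
    using ex unfolding exact_at_def by blast
qed

lemma contracting_homotopy:
  fixes X :: "('v, 'a, 'k::field) rep"
  assumes X: "projective src tgt X" and R: "proj_resolution src tgt X P d e"
  shows "\<exists>S. is_hom src tgt (aug_obj X P j) (aug_obj X P (Suc j)) S \<and>
     hcomp (aug_obj X P (Suc j)) (aug_diff e d j) (hcomp (aug_obj X P j) S (aug_diff e d j)) = aug_diff e d j \<and>
     hcomp (aug_obj X P j) S (hcomp (aug_obj X P (Suc j)) (aug_diff e d j) S) = S"
proof (induction j)
  case 0
  have e: "is_hom src tgt (P 0) X e" and es: "hom_surj (P 0) X e"
    using R unfolding proj_resolution_def by auto
  have repX: "is_rep src tgt X" using X unfolding projective_def by auto
  obtain \<sigma> where s: "is_hom src tgt X (P 0) \<sigma>" and es': "hcomp (P 0) e \<sigma> = hom_id X"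
    using X e es is_hom_id[OF repX] unfolding projective_def by blast
  have "hcomp (P 0) e (hcomp X \<sigma> e) = e"
    unfolding hcomp_assoc[symmetric] es' by (rule hcomp_id_left[OF e])
  moreover have "hcomp X \<sigma> (hcomp (P 0) e \<sigma>) = \<sigma>"
    unfolding es' by (rule hcomp_id_right[OF s])
  ultimately show ?case using s by auto
next
  case (Suc j)
  then obtain S where S: "is_hom src tgt (aug_obj X P j) (aug_obj X P (Suc j)) S"
    and DSD: "hcomp (aug_obj X P (Suc j)) (aug_diff e d j) (hcomp (aug_obj X P j) S (aug_diff e d j)) = aug_diff e d j"
    and SDS: "hcomp (aug_obj X P j) S (hcomp (aug_obj X P (Suc j)) (aug_diff e d j) S) = S" by blast
  from contracting_homotopy_step[OF aug_resolution(1)[OF X R, where j="Suc j"] aug_resolution(2)[OF X R, where j=j] aug_resolution(2)[OF X R, where j="Suc j"]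
      S aug_resolution(3)[OF X R, where j=j] aug_resolution(4)[OF X R, where j=j] DSD SDS]
  show ?case by blast
qed

lemma Ext_zero_projective:
  fixes X :: "('v, 'a, 'k::field) rep"
  assumes X: "projective src tgt X" and i: "0 < i"
  shows "Ext_zero src tgt i X Y"
  unfolding Ext_zero_def
proof (intro allI impI)
  fix P d e g
  assume R: "proj_resolution src tgt X P d e"
    and g: "is_hom src tgt (P i) Y g \<and> hcomp (P i) g (d i) = zero_hom"
  obtain i' where ii: "i = Suc i'" using i by (cases i) auto
  obtain S where S: "is_hom src tgt (aug_obj X P i) (aug_obj X P (Suc i)) S"
    and DSD: "hcomp (aug_obj X P (Suc i)) (aug_diff e d i) (hcomp (aug_obj X P i) S (aug_diff e d i)) = aug_diff e d i"
    and SDS: "hcomp (aug_obj X P i) S (hcomp (aug_obj X P (Suc i)) (aug_diff e d i) S) = S"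
    using contracting_homotopy[OF X R] by blast
  obtain S' where S': "is_hom src tgt (aug_obj X P (Suc i)) (aug_obj X P (Suc (Suc i))) S'"
    and E: "hcomp (aug_obj X P (Suc (Suc i))) (aug_diff e d (Suc i)) S' = hom_diff (hom_id (aug_obj X P (Suc i))) (hcomp (aug_obj X P i) S (aug_diff e d i))"
    using contracting_homotopy_step[OF aug_resolution(1)[OF X R, where j="Suc i"] aug_resolution(2)[OF X R, where j=i] aug_resolution(2)[OF X R, where j="Suc i"]
      S aug_resolution(3)[OF X R, where j=i] aug_resolution(4)[OF X R, where j=i] DSD SDS] by blast
  have E': "hcomp (aug_obj X P i) S (aug_diff e d i) = hom_diff (hom_id (aug_obj X P (Suc i))) (hcomp (aug_obj X P (Suc (Suc i))) (aug_diff e d (Suc i)) S')"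
    using E unfolding hom_diff_def by (auto simp: fun_eq_iff algebra_simps)
  have gh: "is_hom src tgt (aug_obj X P (Suc i)) Y g" using g by simp
  define h where "h = hcomp (aug_obj X P (Suc i)) g S"
  have "is_hom src tgt (P (i - 1)) Y h" unfolding h_def using is_hom_comp[OF S gh] ii by simp
  moreover have "hcomp (P (i - 1)) h (d (i - 1)) = g"
  proof -
    have "hcomp (P (i - 1)) h (d (i - 1)) = hcomp (aug_obj X P i) h (aug_diff e d i)" using ii by simp
    also have "\<dots> = hcomp (aug_obj X P (Suc i)) g (hcomp (aug_obj X P i) S (aug_diff e d i))"
      unfolding h_def hcomp_assoc ..
    also have "\<dots> = hom_diff g (hcomp (aug_obj X P (Suc (Suc i))) (hcomp (aug_obj X P (Suc i)) g (aug_diff e d (Suc i))) S')"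
      unfolding E' hcomp_diff_right hcomp_id_right[OF gh] hcomp_assoc ..
    also have "\<dots> = g" using g by (simp add: hcomp_zero_left hom_diff_zero)
    finally show ?thesis .
  qed
  ultimately show "\<exists>h. is_hom src tgt (P (i - 1)) Y h \<and> hcomp (P (i - 1)) h (d (i - 1)) = g" by blast
qed

section \<open>Free representations\<close>

text \<open>Coordinates of free representations are laid out arrow by arrow along a fixed
  enumeration of the finite arrow type.\<close>

definition arrow_enum :: "nat \<Rightarrow> 'a::finite" where
  "arrow_enum = (SOME f. bij_betw f {..<(card (UNIV::'a set))} (UNIV::'a set))"

definition arrow_idx :: "'a::finite \<Rightarrow> nat" where
  "arrow_idx a = inv_into {..<(card (UNIV::'a set))} arrow_enum a"

lemma arrow_enum_bij: "bij_betw (arrow_enum :: nat \<Rightarrow> 'a::finite) {..<(card (UNIV::'a set))} UNIV"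
proof -
  have "\<exists>f. bij_betw f {..<(card (UNIV::'a set))} (UNIV::'a set)"
    using ex_bij_betw_nat_finite[of "UNIV::'a set"] by (auto simp: atLeast0LessThan)
  then show ?thesis unfolding arrow_enum_def by (rule someI_ex)
qed

lemma arrow_idx_lt: "arrow_idx (a::'a::finite) < (card (UNIV::'a set))"
  unfolding arrow_idx_def using arrow_enum_bij[where 'a='a]
  by (metis bij_betw_def inv_into_into iso_tuple_UNIV_I lessThan_iff)

lemma arrow_enum_arrow_idx[simp]: "arrow_enum (arrow_idx (a::'a::finite)) = a"
  unfolding arrow_idx_def using arrow_enum_bij[where 'a='a]
  by (simp add: bij_betw_def f_inv_into_f)

lemma arrow_idx_arrow_enum: "s < (card (UNIV::'a set)) \<Longrightarrow> arrow_idx (arrow_enum s :: 'a::finite) = s"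
  unfolding arrow_idx_def using arrow_enum_bij[where 'a='a]
  by (simp add: bij_betw_def inv_into_f_f)

lemma arrow_idx_inj: "arrow_idx (a::'a::finite) = arrow_idx b \<Longrightarrow> a = b"
  by (metis arrow_enum_arrow_idx)

definition prefix_sum :: "(nat \<Rightarrow> nat) \<Rightarrow> nat \<Rightarrow> nat" where
  "prefix_sum f t = (\<Sum>s<t. f s)"

lemma prefix_sum_Suc: "prefix_sum f (Suc t) = prefix_sum f t + f t"
  unfolding prefix_sum_def by simp

lemma prefix_sum_mono: "s \<le> t \<Longrightarrow> prefix_sum f s \<le> prefix_sum f t"
  unfolding prefix_sum_def by (rule sum_mono2) auto

lemma prefix_sum_bound: "s < n \<Longrightarrow> l < f s \<Longrightarrow> prefix_sum f s + l < prefix_sum f n"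
  using prefix_sum_mono[of "Suc s" n f] by (simp add: prefix_sum_Suc)

lemma prefix_sum_decode: "p < prefix_sum f n \<Longrightarrow> \<exists>s<n. \<exists>l<f s. p = prefix_sum f s + l"
proof (induction n)
  case 0 then show ?case by (simp add: prefix_sum_def)
next
  case (Suc n)
  show ?case
  proof (cases "p < prefix_sum f n")
    case True then show ?thesis using Suc.IH by (meson less_Suc_eq)
  next
    case False
    then have "p - prefix_sum f n < f n" "p = prefix_sum f n + (p - prefix_sum f n)"
      using Suc.prems by (auto simp: prefix_sum_Suc)
    then show ?thesis by blast
  qed
qed

lemma prefix_sum_unique:
  assumes "l < f s" "l' < f s'" "prefix_sum f s + l = prefix_sum f s' + l'"
  shows "s = s' \<and> l = l'"
proof -
  have "\<not> s < s'" if "l < f s" "l' < f s'" "prefix_sum f s + l = prefix_sum f s' + l'" for s s' l l'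
  proof
    assume "s < s'"
    then have "prefix_sum f s + l < prefix_sum f (Suc s)" using that by (simp add: prefix_sum_Suc)
    also have "\<dots> \<le> prefix_sum f s'" using \<open>s < s'\<close> by (intro prefix_sum_mono) simp
    finally show False using that by simp
  qed
  then have "s = s'" using assms by (metis linorder_neqE_nat)
  then show ?thesis using assms by simp
qed

text \<open>free_rep m is the projective \<Oplus>x. P_x ^ (m x). At a vertex y its first m y coordinates
  span the top; they are followed by the radical, consisting of one block of length m (src a)
  for each arrow a into y, starting at rad_offset m a. The arrow a maps the top of the
  summands at src a identically onto its block.\<close>

definition rad_block :: "('a::finite \<Rightarrow> 'v) \<Rightarrow> ('a \<Rightarrow> 'v) \<Rightarrow> ('v \<Rightarrow> nat) \<Rightarrow> 'v \<Rightarrow> nat \<Rightarrow> nat" where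
  "rad_block src tgt m y s = (if tgt (arrow_enum s) = y then m (src (arrow_enum s)) else 0)"

definition rad_mult :: "('a::finite \<Rightarrow> 'v) \<Rightarrow> ('a \<Rightarrow> 'v) \<Rightarrow> ('v \<Rightarrow> nat) \<Rightarrow> 'v \<Rightarrow> nat" where
  "rad_mult src tgt m y = prefix_sum (rad_block src tgt m y) (card (UNIV::'a set))"

definition rad_offset :: "('a::finite \<Rightarrow> 'v) \<Rightarrow> ('a \<Rightarrow> 'v) \<Rightarrow> ('v \<Rightarrow> nat) \<Rightarrow> 'a \<Rightarrow> nat" where
  "rad_offset src tgt m a = prefix_sum (rad_block src tgt m (tgt a)) (arrow_idx a)"

definition free_dim :: "('a::finite \<Rightarrow> 'v) \<Rightarrow> ('a \<Rightarrow> 'v) \<Rightarrow> ('v \<Rightarrow> nat) \<Rightarrow> 'v \<Rightarrow> nat" where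
  "free_dim src tgt m y = m y + rad_mult src tgt m y"

definition free_act :: "('a::finite \<Rightarrow> 'v) \<Rightarrow> ('a \<Rightarrow> 'v) \<Rightarrow> ('v \<Rightarrow> nat) \<Rightarrow> 'a \<Rightarrow> ('k::field) mat" where
  "free_act src tgt m a = (\<lambda>i j. if j < m (src a) \<and> i = m (tgt a) + rad_offset src tgt m a + j then 1 else 0)"

definition free_rep :: "('a::finite \<Rightarrow> 'v) \<Rightarrow> ('a \<Rightarrow> 'v) \<Rightarrow> ('v \<Rightarrow> nat) \<Rightarrow> ('v, 'a, 'k::field) rep" where
  "free_rep src tgt m = (free_dim src tgt m, free_act src tgt m)"

lemma rdim_free_rep[simp]: "rdim (free_rep src tgt m) = free_dim src tgt m"
  unfolding free_rep_def rdim_def by simp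

lemma ract_free_rep[simp]: "ract (free_rep src tgt m) = free_act src tgt m"
  unfolding free_rep_def ract_def by simp

lemma rad_block_arrow_idx: "rad_block src tgt m (tgt a) (arrow_idx a) = m (src a)"
  unfolding rad_block_def by simp

lemma rad_offset_bound: "j < m (src a) \<Longrightarrow> rad_offset src tgt m a + j < rad_mult src tgt m (tgt a)"
  unfolding rad_offset_def rad_mult_def
  by (rule prefix_sum_bound) (auto simp: arrow_idx_lt rad_block_arrow_idx)

lemma rad_offset_decode:
  assumes "p < rad_mult src tgt m y"
  shows "\<exists>a l. tgt a = y \<and> l < m (src a) \<and> p = rad_offset src tgt m a + l"
proof -
  obtain s l where s: "s < (card (UNIV::'a set))" and l: "l < rad_block src tgt m y s"
    and p: "p = prefix_sum (rad_block src tgt m y) s + l"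
    using prefix_sum_decode[OF assms[unfolded rad_mult_def]] by blast
  define a where "a = (arrow_enum s :: 'a)"
  have sa: "arrow_idx a = s" unfolding a_def using s by (rule arrow_idx_arrow_enum)
  have t: "tgt a = y" using l unfolding rad_block_def a_def by (auto split: if_splits)
  have "l < m (src a)" using l t unfolding rad_block_def a_def by auto
  moreover have "p = rad_offset src tgt m a + l" unfolding rad_offset_def t sa p ..
  ultimately show ?thesis using t by blast
qed

lemma rad_offset_inj:
  assumes "tgt a = tgt a'" "l < m (src a)" "l' < m (src a')"
    "rad_offset src tgt m a + l = rad_offset src tgt m a' + l'"
  shows "a = a' \<and> l = l'"
proof -
  have "arrow_idx a = arrow_idx a' \<and> l = l'"
    using prefix_sum_unique[of l "rad_block src tgt m (tgt a)" "arrow_idx a" l' "arrow_idx a'"] assms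
    unfolding rad_offset_def by (metis rad_block_arrow_idx)
  then show ?thesis using arrow_idx_inj by blast
qed

lemma free_col_cases:
  fixes src tgt :: "'a::finite \<Rightarrow> 'v"
  obtains (top) "j < m y"
  | (rad) a l where "tgt a = y" "l < m (src a)" "j = m y + rad_offset src tgt m a + l"
  | (out) "free_dim src tgt m y \<le> j"
proof -
  consider "j < m y" | "\<not> j < m y" "j < free_dim src tgt m y" | "free_dim src tgt m y \<le> j" by linarith
  then show thesis
  proof cases
    case 2
    then have "j - m y < rad_mult src tgt m y" unfolding free_dim_def by simp
    from rad_offset_decode[OF this] obtain a l
      where "tgt a = y" "l < m (src a)" "j - m y = rad_offset src tgt m a + l" by blast
    with 2 show thesis by (intro rad) auto
  qed (fact top out)+
qed

lemma is_rep_free_rep: "is_rep src tgt (free_rep src tgt m :: ('v, 'a::finite, 'k::field) rep)"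
  unfolding is_rep_def
proof (intro conjI allI impI)
  fix a :: 'a
  show "mat_on (rdim (free_rep src tgt m) (tgt a)) (rdim (free_rep src tgt m) (src a))
      (ract (free_rep src tgt m :: ('v, 'a, 'k) rep) a)"
    unfolding mat_on_def rdim_free_rep ract_free_rep free_act_def free_dim_def
    by (auto dest: rad_offset_bound[of _ m src a tgt] simp: not_less[symmetric])
next
  fix a b :: 'a assume ab: "tgt a = src b"
  show "mmul (rdim (free_rep src tgt m) (tgt a)) (ract (free_rep src tgt m :: ('v, 'a, 'k) rep) b)
      (ract (free_rep src tgt m :: ('v, 'a, 'k) rep) a) = (\<lambda>_ _. 0)"
    unfolding mmul_def ract_free_rep free_act_def using ab by (auto intro!: ext sum.neutral)
qed

lemma mmul_free_act:
  "mmul (free_dim src tgt m (tgt a)) A (free_act src tgt m a) i j =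
     (if j < m (src a) then A i (m (tgt a) + rad_offset src tgt m a + j) else 0)"
proof (cases "j < m (src a)")
  case True
  have "m (tgt a) + rad_offset src tgt m a + j < free_dim src tgt m (tgt a)"
    using rad_offset_bound[where src=src and tgt=tgt and m=m and a=a, OF True] unfolding free_dim_def by simp
  then show ?thesis unfolding mmul_def free_act_def using True
    by (simp add: if_distrib[of "\<lambda>x. _ * x"] sum.delta' cong: if_cong)
qed (simp add: mmul_def free_act_def)

definition rad_decode :: "('a::finite \<Rightarrow> 'v) \<Rightarrow> ('a \<Rightarrow> 'v) \<Rightarrow> ('v \<Rightarrow> nat) \<Rightarrow> 'v \<Rightarrow> nat \<Rightarrow> 'a \<times> nat" where
  "rad_decode src tgt m y p =
     (SOME al. tgt (fst al) = y \<and> snd al < m (src (fst al)) \<and> p = rad_offset src tgt m (fst al) + snd al)"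

lemma rad_decode_rad_offset:
  assumes "tgt a = y" "l < m (src a)"
  shows "rad_decode src tgt m y (rad_offset src tgt m a + l) = (a, l)"
proof -
  define al where "al = rad_decode src tgt m y (rad_offset src tgt m a + l)"
  have "tgt (fst al) = y \<and> snd al < m (src (fst al)) \<and>
      rad_offset src tgt m a + l = rad_offset src tgt m (fst al) + snd al"
    unfolding al_def rad_decode_def by (rule someI[of _ "(a, l)"]) (use assms in simp)
  then have "a = fst al \<and> l = snd al"
    using assms rad_offset_inj[where a=a and a'="fst al" and l=l and l'="snd al" and m=m and src=src and tgt=tgt]
    by auto
  then show ?thesis unfolding al_def[symmetric] by (cases al) auto
qed

text \<open>The homomorphism out of free_rep m with prescribed values \<phi> on the top.\<close>

definition free_ext :: "('a::finite \<Rightarrow> 'v) \<Rightarrow> ('a \<Rightarrow> 'v) \<Rightarrow> ('v, 'a, 'k::field) rep \<Rightarrow> ('v \<Rightarrow> nat)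
    \<Rightarrow> ('v, 'k) hom \<Rightarrow> ('v, 'k) hom" where
  "free_ext src tgt N m \<phi> = (\<lambda>y i j. if j < m y then \<phi> y i j else if j < free_dim src tgt m y then
      (case rad_decode src tgt m y (j - m y) of (a, l) \<Rightarrow> \<Sum>r<rdim N (src a). ract N a i r * \<phi> (src a) r l)
      else 0)"

lemma free_ext_top: "j < m y \<Longrightarrow> free_ext src tgt N m \<phi> y i j = \<phi> y i j"
  unfolding free_ext_def by simp

lemma free_ext_rad:
  assumes "tgt a = y" "l < m (src a)"
  shows "free_ext src tgt N m \<phi> y i (m y + rad_offset src tgt m a + l) =
    mmul (rdim N (src a)) (ract N a) (\<phi> (src a)) i l"
proof -
  have "rad_offset src tgt m a + l < rad_mult src tgt m y" using rad_offset_bound[of l m src a tgt] assms by simp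
  then show ?thesis unfolding free_ext_def free_dim_def mmul_def
    using rad_decode_rad_offset[where src=src and tgt=tgt and m=m, OF assms] by (simp add: add.assoc)
qed

lemma free_ext_out: "free_dim src tgt m y \<le> j \<Longrightarrow> free_ext src tgt N m \<phi> y i j = 0"
  unfolding free_ext_def free_dim_def by auto

lemma mat_on_free_ext:
  fixes N :: "('v, 'a::finite, 'k::field) rep"
  assumes N: "is_rep src tgt N" and phi: "mat_on (rdim N y) (m y) (\<phi> y)"
  shows "mat_on (rdim N y) (free_dim src tgt m y) (free_ext src tgt N m \<phi> y)"
  unfolding mat_on_def
proof (intro allI impI)
  fix i j assume ij: "rdim N y \<le> i \<or> free_dim src tgt m y \<le> j"
  show "free_ext src tgt N m \<phi> y i j = 0"
  proof (cases j rule: free_col_cases[where src=src and tgt=tgt and m=m and y=y])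
    case top then show ?thesis using phi ij by (simp add: free_ext_top mat_on_def free_dim_def)
  next
    case (rad a l)
    have "free_dim src tgt m y > j" using rad rad_offset_bound[of l m src a tgt] by (simp add: free_dim_def)
    then have "rdim N (tgt a) \<le> i" using ij rad(1) by simp
    then show ?thesis unfolding rad(3) free_ext_rad[where src=src and tgt=tgt and m=m, OF rad(1,2)] mmul_def
      using mat_onD[OF is_repD(1)[OF N, of a]] by simp
  qed (simp add: free_ext_out)
qed

lemma free_ext_commutes:
  fixes N :: "('v, 'a::finite, 'k::field) rep"
  assumes N: "is_rep src tgt N"
  shows "mmul (free_dim src tgt m (tgt a)) (free_ext src tgt N m \<phi> (tgt a)) (free_act src tgt m a) =
    mmul (rdim N (src a)) (ract N a) (free_ext src tgt N m \<phi> (src a))"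
proof (intro ext)
  fix i j
  show "mmul (free_dim src tgt m (tgt a)) (free_ext src tgt N m \<phi> (tgt a)) (free_act src tgt m a) i j =
    mmul (rdim N (src a)) (ract N a) (free_ext src tgt N m \<phi> (src a)) i j"
  proof (cases j rule: free_col_cases[where src=src and tgt=tgt and m=m and y="src a"])
    case top
    have "mmul (free_dim src tgt m (tgt a)) (free_ext src tgt N m \<phi> (tgt a)) (free_act src tgt m a) i j =
        free_ext src tgt N m \<phi> (tgt a) i (m (tgt a) + rad_offset src tgt m a + j)"
      unfolding mmul_free_act using top by simp
    also have "\<dots> = mmul (rdim N (src a)) (ract N a) (\<phi> (src a)) i j"
      by (rule free_ext_rad[where src=src and tgt=tgt and m=m, OF refl top])
    also have "\<dots> = mmul (rdim N (src a)) (ract N a) (free_ext src tgt N m \<phi> (src a)) i j"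
      unfolding mmul_def using top by (simp add: free_ext_top)
    finally show ?thesis .
  next
    case (rad a' l)
    text \<open>Columns of the radical are killed by a, since paths of length two act as zero.\<close>
    have "mmul (rdim N (src a)) (ract N a) (free_ext src tgt N m \<phi> (src a)) i j
        = mmul (rdim N (src a)) (ract N a) (mmul (rdim N (src a')) (ract N a') (\<phi> (src a'))) i l"
      unfolding rad(3) mmul_def[of "rdim N (src a)"] free_ext_rad[where src=src and tgt=tgt and m=m, OF rad(1,2)] ..
    also have "\<dots> = 0"
      unfolding mmul_assoc[symmetric] rad(1)[symmetric] is_repD(2)[OF N rad(1)] by (simp add: mmul_def)
    finally show ?thesis unfolding mmul_free_act using rad by simp
  next
    case out
    then show ?thesis unfolding mmul_free_act by (simp add: mmul_def free_ext_out free_dim_def)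
  qed
qed

lemma is_hom_free_ext:
  fixes N :: "('v, 'a::finite, 'k::field) rep"
  assumes N: "is_rep src tgt N" and phi: "\<And>y. mat_on (rdim N y) (m y) (\<phi> y)"
  shows "is_hom src tgt (free_rep src tgt m) N (free_ext src tgt N m \<phi>)"
  unfolding is_hom_def rdim_free_rep ract_free_rep
  by (intro conjI allI is_rep_free_rep N mat_on_free_ext[where m=m and \<phi>=\<phi>, OF N phi] free_ext_commutes[OF N])

definition top_part :: "('v \<Rightarrow> nat) \<Rightarrow> ('v, 'k::field) hom \<Rightarrow> ('v, 'k) hom" where
  "top_part m f = (\<lambda>y i j. if j < m y then f y i j else 0)"

lemma free_ext_top_part:
  fixes N :: "('v, 'a::finite, 'k::field) rep"
  assumes f: "is_hom src tgt (free_rep src tgt m) N f"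
  shows "f = free_ext src tgt N m (top_part m f)"
proof (intro ext)
  fix y i j
  show "f y i j = free_ext src tgt N m (top_part m f) y i j"
  proof (cases j rule: free_col_cases[where src=src and tgt=tgt and m=m and y=y])
    case top then show ?thesis by (simp add: free_ext_top top_part_def)
  next
    case (rad a l)
    have "f y i j = mmul (free_dim src tgt m (tgt a)) (f (tgt a)) (free_act src tgt m a) i l"
      unfolding mmul_free_act using rad by simp
    also have "\<dots> = mmul (rdim N (src a)) (ract N a) (f (src a)) i l"
      using is_homD(4)[OF f] by simp
    also have "\<dots> = free_ext src tgt N m (top_part m f) y i j"
      unfolding rad(3) free_ext_rad[where src=src and tgt=tgt and m=m, OF rad(1,2)] mmul_def top_part_def using rad(2) by simp
    finally show ?thesis .
  next
    case out
    then show ?thesis using is_homD(3)[OF f, of y] by (simp add: free_ext_out mat_on_def)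
  qed
qed

lemma free_ext_eqI:
  fixes N :: "('v, 'a::finite, 'k::field) rep"
  assumes f: "is_hom src tgt (free_rep src tgt m) N f" and g: "is_hom src tgt (free_rep src tgt m) N g"
    and top: "\<And>y i j. j < m y \<Longrightarrow> f y i j = g y i j"
  shows "f = g"
proof -
  have "top_part m f = top_part m g" using top unfolding top_part_def by (auto intro!: ext)
  then show ?thesis using free_ext_top_part[OF f] free_ext_top_part[OF g] by simp
qed

lemma projective_free_rep: "projective src tgt (free_rep src tgt m :: ('v, 'a::finite, 'k::field) rep)"
  unfolding projective_def
proof (intro conjI allI impI)
  show "is_rep src tgt (free_rep src tgt m :: ('v, 'a, 'k) rep)" by (rule is_rep_free_rep)
  fix X Y :: "('v, 'a, 'k) rep" and g h
  assume "is_hom src tgt X Y g \<and> hom_surj X Y g \<and> is_hom src tgt (free_rep src tgt m) Y h"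
  then have g: "is_hom src tgt X Y g" and gs: "hom_surj X Y g" and h: "is_hom src tgt (free_rep src tgt m) Y h"
    by auto
  define pre where "pre = (\<lambda>y j. SOME x. x \<in> vspace (rdim X y) \<and> mvec (rdim X y) (g y) x = (\<lambda>i. h y i j))"
  have pre: "pre y j \<in> vspace (rdim X y) \<and> mvec (rdim X y) (g y) (pre y j) = (\<lambda>i. h y i j)" for y j
  proof -
    have "(\<lambda>i. h y i j) \<in> vspace (rdim Y y)" using is_homD(3)[OF h, of y] unfolding vspace_def mat_on_def by auto
    then have "\<exists>x. x \<in> vspace (rdim X y) \<and> mvec (rdim X y) (g y) x = (\<lambda>i. h y i j)"
      using gs unfolding hom_surj_def by blast
    then show ?thesis unfolding pre_def by (rule someI_ex)
  qed
  define \<phi> where "\<phi> = (\<lambda>y i j. if j < m y then pre y j i else 0)"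
  have phi: "mat_on (rdim X y) (m y) (\<phi> y)" for y
    using pre unfolding \<phi>_def mat_on_def vspace_def by auto
  have X: "is_rep src tgt X" using g by (rule is_homD)
  have h': "is_hom src tgt (free_rep src tgt m) X (free_ext src tgt X m \<phi>)" using is_hom_free_ext[OF X phi] .
  have "hcomp X g (free_ext src tgt X m \<phi>) = h"
  proof (rule free_ext_eqI[OF is_hom_comp[OF h' g] h])
    fix y i j assume j: "j < m y"
    have "hcomp X g (free_ext src tgt X m \<phi>) y i j = mvec (rdim X y) (g y) (pre y j) i"
      unfolding hcomp_def mmul_def mvec_def using j by (simp add: free_ext_top \<phi>_def)
    then show "hcomp X g (free_ext src tgt X m \<phi>) y i j = h y i j" using pre by simp
  qed
  then show "\<exists>h'. is_hom src tgt (free_rep src tgt m) X h' \<and> hcomp X g h' = h" using h' by blast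
qed

definition top_hom :: "('v, 'k::field) hom \<Rightarrow> ('v \<Rightarrow> nat) \<Rightarrow> ('v, 'k) hom" where
  "top_hom \<iota> k = (\<lambda>y i j. if j < k y then \<iota> y i j else 0)"

lemma is_hom_top_hom:
  fixes N :: "('v, 'a::finite, 'k::field) rep"
  assumes N: "is_rep src tgt N" and io: "\<And>y. mat_on (rdim N y) (k y) (\<iota> y)"
    and z: "\<And>a i l. l < k (src a) \<Longrightarrow> mmul (rdim N (src a)) (ract N a) (\<iota> (src a)) i l = 0"
  shows "is_hom src tgt (free_rep src tgt k) N (top_hom \<iota> k)"
proof -
  have "top_hom \<iota> k y i j = free_ext src tgt N k \<iota> y i j" for y i j
  proof (cases j rule: free_col_cases[where src=src and tgt=tgt and m=k and y=y])
    case (rad a l)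
    then show ?thesis using z[OF rad(2)] unfolding rad(3) free_ext_rad[where src=src and tgt=tgt and m=k, OF rad(1,2)] top_hom_def by simp
  qed (simp_all add: top_hom_def free_ext_top free_ext_out free_dim_def)
  then have "top_hom \<iota> k = free_ext src tgt N k \<iota>" by blast
  then show ?thesis using is_hom_free_ext[OF N io] by simp
qed

lemma is_hom_top_hom_rad:
  assumes io: "\<And>y. mat_on (free_dim src tgt m y) (k y) (\<psi> y)" and rad: "\<And>y i j. i < m y \<Longrightarrow> \<psi> y i j = 0"
  shows "is_hom src tgt (free_rep src tgt k) (free_rep src tgt m :: ('v, 'a::finite, 'k::field) rep) (top_hom \<psi> k)"
  by (rule is_hom_top_hom[OF is_rep_free_rep]) (use io rad in \<open>auto simp: mmul_def free_act_def intro!: sum.neutral\<close>)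

lemma mvec_restrict: "mvec c A x = mvec c A (\<lambda>j. if j < c then x j else 0)"
  unfolding mvec_def by (auto intro!: ext sum.cong)

lemma mvec_top_hom:
  assumes "k y \<le> n"
  shows "mvec n (top_hom \<iota> k y) x = mvec (k y) (\<iota> y) x"
proof -
  obtain d where n: "n = k y + d" using assms by (metis le_add_diff_inverse)
  show ?thesis unfolding mvec_def top_hom_def n sum_lessThan_add by simp
qed

lemma image_top_hom:
  "(\<exists>z\<in>vspace (free_dim src tgt k y). mvec (free_dim src tgt k y) (top_hom \<iota> k y) z = x) \<longleftrightarrow>
   (\<exists>w\<in>vspace (k y). mvec (k y) (\<iota> y) w = x)"
proof
  assume "\<exists>z\<in>vspace (free_dim src tgt k y). mvec (free_dim src tgt k y) (top_hom \<iota> k y) z = x"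
  then obtain z where z: "mvec (free_dim src tgt k y) (top_hom \<iota> k y) z = x" by blast
  have "(\<lambda>j. if j < k y then z j else 0) \<in> vspace (k y)" unfolding vspace_def by auto
  moreover have "mvec (k y) (\<iota> y) (\<lambda>j. if j < k y then z j else 0) = x"
    using z mvec_restrict[of "k y" "\<iota> y" z] by (simp add: mvec_top_hom free_dim_def)
  ultimately show "\<exists>w\<in>vspace (k y). mvec (k y) (\<iota> y) w = x" by blast
next
  assume "\<exists>w\<in>vspace (k y). mvec (k y) (\<iota> y) w = x"
  then obtain w where w: "w \<in> vspace (k y)" "mvec (k y) (\<iota> y) w = x" by blast
  have "w \<in> vspace (free_dim src tgt k y)" using w(1) unfolding vspace_def free_dim_def by auto
  moreover have "mvec (free_dim src tgt k y) (top_hom \<iota> k y) w = x" using w(2) by (simp add: mvec_top_hom free_dim_def)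
  ultimately show "\<exists>z\<in>vspace (free_dim src tgt k y). mvec (free_dim src tgt k y) (top_hom \<iota> k y) z = x" by blast
qed

lemma kernel_top_hom:
  assumes inj: "\<And>w. w \<in> vspace (k y) \<Longrightarrow> mvec (k y) (\<iota> y) w = (\<lambda>_. 0) \<Longrightarrow> w = (\<lambda>_. 0)"
  shows "(mvec (free_dim src tgt k y) (top_hom \<iota> k y) x = (\<lambda>_. 0)) \<longleftrightarrow> (\<forall>i<k y. x i = 0)"
proof -
  define x' where "x' = (\<lambda>j. if j < k y then x j else 0)"
  have eq: "mvec (free_dim src tgt k y) (top_hom \<iota> k y) x = mvec (k y) (\<iota> y) x'"
    unfolding x'_def mvec_restrict[symmetric] by (simp add: mvec_top_hom free_dim_def)
  have "x' \<in> vspace (k y)" unfolding x'_def vspace_def by auto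
  then have "mvec (k y) (\<iota> y) x' = (\<lambda>_. 0) \<longleftrightarrow> x' = (\<lambda>_. 0)" using inj mvec_zero_vec by metis
  also have "\<dots> \<longleftrightarrow> (\<forall>i<k y. x i = 0)" unfolding x'_def by (auto simp: fun_eq_iff)
  finally show ?thesis unfolding eq .
qed

text \<open>The radical of free_rep m is semisimple with top free_rep (rad_mult m); rad_cover is
  the projective cover of it.\<close>

definition rad_incl :: "('a::finite \<Rightarrow> 'v) \<Rightarrow> ('a \<Rightarrow> 'v) \<Rightarrow> ('v \<Rightarrow> nat) \<Rightarrow> ('v, 'k::field) hom" where
  "rad_incl src tgt m = (\<lambda>y i j. if j < rad_mult src tgt m y \<and> i = m y + j then 1 else 0)"

definition rad_cover :: "('a::finite \<Rightarrow> 'v) \<Rightarrow> ('a \<Rightarrow> 'v) \<Rightarrow> ('v \<Rightarrow> nat) \<Rightarrow> ('v, 'k::field) hom" where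
  "rad_cover src tgt m = top_hom (rad_incl src tgt m) (rad_mult src tgt m)"

lemma mat_on_rad_incl: "mat_on (free_dim src tgt m y) (rad_mult src tgt m y) (rad_incl src tgt m y)"
  unfolding mat_on_def rad_incl_def free_dim_def by auto

lemma is_hom_rad_cover:
  "is_hom src tgt (free_rep src tgt (rad_mult src tgt m)) (free_rep src tgt m :: ('v, 'a::finite, 'k::field) rep)
     (rad_cover src tgt m)"
  unfolding rad_cover_def
proof (rule is_hom_top_hom[OF is_rep_free_rep])
  fix y show "mat_on (rdim (free_rep src tgt m :: ('v, 'a, 'k) rep) y) (rad_mult src tgt m y) (rad_incl src tgt m y)"
    using mat_on_rad_incl by simp
next
  fix a :: 'a and i l
  show "mmul (rdim (free_rep src tgt m :: ('v, 'a, 'k) rep) (src a)) (ract (free_rep src tgt m :: ('v, 'a, 'k) rep) a)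
      (rad_incl src tgt m (src a)) i l = 0"
    unfolding mmul_def ract_free_rep free_act_def rad_incl_def by (auto intro!: sum.neutral)
qed

lemma mvec_rad_incl: "mvec (rad_mult src tgt m y) (rad_incl src tgt m y) z =
   (\<lambda>i. if m y \<le> i \<and> i < m y + rad_mult src tgt m y then z (i - m y) else 0)"
proof (intro ext)
  fix i
  show "mvec (rad_mult src tgt m y) (rad_incl src tgt m y) z i =
    (if m y \<le> i \<and> i < m y + rad_mult src tgt m y then z (i - m y) else 0)"
  proof (cases "m y \<le> i \<and> i < m y + rad_mult src tgt m y")
    case True
    then have e: "\<And>j. (j < rad_mult src tgt m y \<and> i = m y + j) = (j = i - m y)" by auto
    have "mvec (rad_mult src tgt m y) (rad_incl src tgt m y) z i = (\<Sum>j<rad_mult src tgt m y. if j = i - m y then z j else 0)"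
      unfolding mvec_def rad_incl_def e by (simp add: if_distrib[of "\<lambda>x. x * _"] cong: if_cong)
    moreover have "i - m y < rad_mult src tgt m y" using True by linarith
    ultimately show ?thesis using True by (simp add: sum.delta)
  next
    case False
    then show ?thesis unfolding mvec_def rad_incl_def by (auto intro!: sum.neutral)
  qed
qed

lemma image_rad_incl:
  assumes x: "x \<in> vspace (free_dim src tgt m y)"
  shows "(\<exists>w\<in>vspace (rad_mult src tgt m y). mvec (rad_mult src tgt m y) (rad_incl src tgt m y) w = x)
     \<longleftrightarrow> (\<forall>i<m y. x i = 0)"
proof
  assume "\<exists>w\<in>vspace (rad_mult src tgt m y). mvec (rad_mult src tgt m y) (rad_incl src tgt m y) w = x"
  then show "\<forall>i<m y. x i = 0" by (auto simp: mvec_rad_incl)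
next
  assume x0: "\<forall>i<m y. x i = 0"
  define w where "w = (\<lambda>j. if j < rad_mult src tgt m y then x (m y + j) else 0)"
  have "w \<in> vspace (rad_mult src tgt m y)" unfolding w_def vspace_def by auto
  moreover have "mvec (rad_mult src tgt m y) (rad_incl src tgt m y) w = x"
    unfolding mvec_rad_incl using x x0 unfolding vspace_def free_dim_def w_def
    by (auto intro!: ext simp: not_le)
  ultimately show "\<exists>w\<in>vspace (rad_mult src tgt m y). mvec (rad_mult src tgt m y) (rad_incl src tgt m y) w = x"
    by blast
qed

lemma rad_incl_inj:
  assumes w: "w \<in> vspace (rad_mult src tgt m y)" and z: "mvec (rad_mult src tgt m y) (rad_incl src tgt m y) w = (\<lambda>_. 0)"
  shows "w = (\<lambda>_. 0)"
proof (intro ext)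
  fix j
  show "w j = 0"
  proof (cases "j < rad_mult src tgt m y")
    case True
    then show ?thesis using fun_cong[OF z, of "m y + j"] unfolding mvec_rad_incl by simp
  next
    case False then show ?thesis using w unfolding vspace_def by simp
  qed
qed

lemma image_rad_cover:
  assumes "x \<in> vspace (free_dim src tgt m y)"
  shows "(\<exists>z\<in>vspace (free_dim src tgt (rad_mult src tgt m) y).
            mvec (free_dim src tgt (rad_mult src tgt m) y) (rad_cover src tgt m y) z = x)
     \<longleftrightarrow> (\<forall>i<m y. x i = 0)"
  unfolding rad_cover_def image_top_hom using image_rad_incl[OF assms] .

lemma top_hom_rad_cover_zero: "hcomp (free_rep src tgt k) (top_hom \<psi> k) (rad_cover src tgt k) = zero_hom"
  unfolding hcomp_def rad_cover_def top_hom_def rad_incl_def mmul_def zero_hom_def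
  by (auto intro!: ext sum.neutral simp: free_dim_def)

text \<open>If the kernel of a projective cover free_rep \<mu> \<rightarrow> X is spanned by the columns of an
  injective \<iota> lying in the radical, it is semisimple with projective cover top_hom \<iota> k, and
  from then on every syzygy is the radical of the previous free module:
  X \<leftarrow> free_rep \<mu> \<leftarrow> free_rep k \<leftarrow> free_rep (rad_mult k) \<leftarrow> free_rep (rad_mult (rad_mult k)) \<leftarrow> \<dots>\<close>

definition rad_mult_iter :: "('a::finite \<Rightarrow> 'v) \<Rightarrow> ('a \<Rightarrow> 'v) \<Rightarrow> ('v \<Rightarrow> nat) \<Rightarrow> nat \<Rightarrow> 'v \<Rightarrow> nat" where
  "rad_mult_iter src tgt k j = ((rad_mult src tgt) ^^ j) k"

lemma rad_mult_iter_simps[simp]: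
  "rad_mult_iter src tgt k 0 = k"
  "rad_mult_iter src tgt k (Suc j) = rad_mult src tgt (rad_mult_iter src tgt k j)"
  unfolding rad_mult_iter_def by simp_all

definition rad_res_obj :: "('a::finite \<Rightarrow> 'v) \<Rightarrow> ('a \<Rightarrow> 'v) \<Rightarrow> ('v \<Rightarrow> nat) \<Rightarrow> ('v \<Rightarrow> nat) \<Rightarrow> nat
    \<Rightarrow> ('v, 'a, 'k::field) rep" where
  "rad_res_obj src tgt \<mu> k j =
     (case j of 0 \<Rightarrow> free_rep src tgt \<mu> | Suc j' \<Rightarrow> free_rep src tgt (rad_mult_iter src tgt k j'))"

definition rad_res_diff :: "('a::finite \<Rightarrow> 'v) \<Rightarrow> ('a \<Rightarrow> 'v) \<Rightarrow> ('v, 'k::field) hom \<Rightarrow> ('v \<Rightarrow> nat) \<Rightarrow> nat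
    \<Rightarrow> ('v, 'k) hom" where
  "rad_res_diff src tgt \<iota> k j =
     (case j of 0 \<Rightarrow> top_hom \<iota> k | Suc j' \<Rightarrow> rad_cover src tgt (rad_mult_iter src tgt k j'))"

lemma rad_res_obj_simps[simp]:
  "rad_res_obj src tgt \<mu> k 0 = free_rep src tgt \<mu>"
  "rad_res_obj src tgt \<mu> k (Suc j) = free_rep src tgt (rad_mult_iter src tgt k j)"
  unfolding rad_res_obj_def by simp_all

lemma rad_res_diff_simps[simp]:
  "rad_res_diff src tgt \<iota> k 0 = top_hom \<iota> k"
  "rad_res_diff src tgt \<iota> k (Suc j) = rad_cover src tgt (rad_mult_iter src tgt k j)"
  unfolding rad_res_diff_def by simp_all

lemma kernel_rad_res_diff:
  assumes inj: "\<And>w. w \<in> vspace (k y) \<Longrightarrow> mvec (k y) (\<iota> y) w = (\<lambda>_. 0) \<Longrightarrow> w = (\<lambda>_. 0)"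
  shows "(mvec (free_dim src tgt (rad_mult_iter src tgt k j) y) (rad_res_diff src tgt \<iota> k j y) x = (\<lambda>_. 0))
    \<longleftrightarrow> (\<forall>i<rad_mult_iter src tgt k j y. x i = 0)"
proof (cases j)
  case 0 then show ?thesis using kernel_top_hom[where \<iota>=\<iota> and k=k, OF inj] by simp
next
  case (Suc j')
  then show ?thesis
    using kernel_top_hom[where \<iota>="rad_incl src tgt (rad_mult_iter src tgt k j')"
        and k="rad_mult src tgt (rad_mult_iter src tgt k j')", OF rad_incl_inj]
    by (simp add: rad_cover_def)
qed

lemma proj_resolution_radical:
  fixes X :: "('v, 'a::finite, 'k::field) rep"
  assumes e: "is_hom src tgt (free_rep src tgt \<mu>) X e" and es: "hom_surj (free_rep src tgt \<mu>) X e"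
    and io: "\<And>y. mat_on (free_dim src tgt \<mu> y) (k y) (\<iota> y)"
    and rad: "\<And>y i j. i < \<mu> y \<Longrightarrow> \<iota> y i j = 0"
    and inj: "\<And>y w. w \<in> vspace (k y) \<Longrightarrow> mvec (k y) (\<iota> y) w = (\<lambda>_. 0) \<Longrightarrow> w = (\<lambda>_. 0)"
    and span: "\<And>y x. x \<in> vspace (free_dim src tgt \<mu> y) \<Longrightarrow>
        (mvec (free_dim src tgt \<mu> y) (e y) x = (\<lambda>_. 0) \<longleftrightarrow> (\<exists>w\<in>vspace (k y). mvec (k y) (\<iota> y) w = x))"
  shows "proj_resolution src tgt X (rad_res_obj src tgt \<mu> k) (rad_res_diff src tgt \<iota> k) e"
proof -
  have d0: "is_hom src tgt (free_rep src tgt k) (free_rep src tgt \<mu> :: ('v, 'a, 'k) rep) (top_hom \<iota> k)"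
    using io rad by (rule is_hom_top_hom_rad)
  show ?thesis unfolding proj_resolution_def
  proof (intro conjI allI)
    show "projective src tgt (rad_res_obj src tgt \<mu> k j)" for j
      by (cases j) (auto intro: projective_free_rep)
    show "is_hom src tgt (rad_res_obj src tgt \<mu> k (Suc j)) (rad_res_obj src tgt \<mu> k j) (rad_res_diff src tgt \<iota> k j)" for j
      using d0 is_hom_rad_cover by (cases j) auto
    show "is_hom src tgt (rad_res_obj src tgt \<mu> k 0) X e" "hom_surj (rad_res_obj src tgt \<mu> k 0) X e"
      using e es by simp_all
    show "exact_at (rad_res_obj src tgt \<mu> k 1) (rad_res_obj src tgt \<mu> k 0) (rad_res_diff src tgt \<iota> k 0) e"
      unfolding exact_at_def using span by (simp add: image_top_hom)
    show "exact_at (rad_res_obj src tgt \<mu> k (Suc (Suc j))) (rad_res_obj src tgt \<mu> k (Suc j))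
        (rad_res_diff src tgt \<iota> k (Suc j)) (rad_res_diff src tgt \<iota> k j)" for j
      unfolding exact_at_def
    proof (intro allI ballI)
      fix y and x :: "'k vec"
      assume "x \<in> vspace (rdim (rad_res_obj src tgt \<mu> k (Suc j)) y)"
      then have x: "x \<in> vspace (free_dim src tgt (rad_mult_iter src tgt k j) y)" by simp
      show "(mvec (rdim (rad_res_obj src tgt \<mu> k (Suc j)) y) (rad_res_diff src tgt \<iota> k j y) x = (\<lambda>_. 0)) =
        (\<exists>z\<in>vspace (rdim (rad_res_obj src tgt \<mu> k (Suc (Suc j))) y).
          mvec (rdim (rad_res_obj src tgt \<mu> k (Suc (Suc j))) y) (rad_res_diff src tgt \<iota> k (Suc j) y) z = x)"
        using kernel_rad_res_diff[where src=src and tgt=tgt and \<iota>=\<iota> and k=k and j=j and y=y, OF inj[of _ y]]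
          image_rad_cover[OF x] by simp
    qed
  qed
qed

section \<open>Linear algebra on coordinate spaces\<close>

definition vanishes_on_kernel :: "nat \<Rightarrow> ('k::field) mat \<Rightarrow> 'k vec \<Rightarrow> bool" where
  "vanishes_on_kernel m D \<phi> \<longleftrightarrow> (\<forall>x\<in>vspace m. mvec m D x = (\<lambda>_. 0) \<longrightarrow> (\<Sum>j<m. \<phi> j * x j) = 0)"

definition in_row_space :: "nat \<Rightarrow> ('k::field) mat \<Rightarrow> 'k vec \<Rightarrow> bool" where
  "in_row_space l D \<phi> \<longleftrightarrow> (\<exists>\<psi>\<in>vspace l. \<forall>j. (\<Sum>i<l. \<psi> i * D i j) = \<phi> j)"

lemma sum_pick: "p < (l::nat) \<Longrightarrow> (\<Sum>i<l. f i) = f p + (\<Sum>i<l. if i = p then 0 else f i)"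
proof -
  assume p: "p < l"
  have "(\<Sum>i<l. f i) = (\<Sum>i<l. (if i = p then f i else 0) + (if i = p then 0 else f i))"
    by (rule sum.cong) auto
  also have "\<dots> = f p + (\<Sum>i<l. if i = p then 0 else f i)"
    using p by (simp add: sum.distrib sum.delta)
  finally show ?thesis .
qed

lemma vanishes_on_kernel_zero_col:
  fixes D :: "('k::field) mat"
  assumes z: "\<forall>i. D i m = 0" and van: "vanishes_on_kernel (Suc m) D \<phi>"
  shows "\<phi> m = 0"
    and "vanishes_on_kernel m (\<lambda>i j. if j < m then D i j else 0) (\<lambda>j. if j < m then \<phi> j else 0)"
proof -
  have em: "(\<lambda>j. if j = m then 1 else 0) \<in> vspace (Suc m)" unfolding vspace_def by auto
  have "mvec (Suc m) D (\<lambda>j. if j = m then 1 else 0) = (\<lambda>_. 0)"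
    unfolding mvec_def using z by (auto intro!: ext simp: if_distrib[of "\<lambda>x. _ * x"] cong: if_cong)
  then have "(\<Sum>j<Suc m. \<phi> j * (if j = m then 1 else 0)) = 0" using van em unfolding vanishes_on_kernel_def by blast
  then show "\<phi> m = 0" by (simp add: if_distrib[of "\<lambda>x. _ * x"] cong: if_cong)
  show "vanishes_on_kernel m (\<lambda>i j. if j < m then D i j else 0) (\<lambda>j. if j < m then \<phi> j else 0)"
    unfolding vanishes_on_kernel_def
  proof (intro ballI impI)
    fix x :: "'k vec" assume x: "x \<in> vspace m" and zx: "mvec m (\<lambda>i j. if j < m then D i j else 0) x = (\<lambda>_. 0)"
    have xs: "x \<in> vspace (Suc m)" and xm: "x m = 0" using x unfolding vspace_def by auto
    have "mvec (Suc m) D x = mvec m (\<lambda>i j. if j < m then D i j else 0) x" unfolding mvec_def using xm by (auto intro!: ext)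
    then have "(\<Sum>j<Suc m. \<phi> j * x j) = 0" using van xs zx unfolding vanishes_on_kernel_def by auto
    then show "(\<Sum>j<m. (if j < m then \<phi> j else 0) * x j) = 0" using xm by simp
  qed
qed

lemma in_row_space_zero_col:
  fixes D :: "('k::field) mat"
  assumes D: "mat_on l (Suc m) D" and \<phi>: "\<phi> \<in> vspace (Suc m)" and z: "\<forall>i. D i m = 0" and \<phi>m: "\<phi> m = 0"
    and row: "in_row_space l (\<lambda>i j. if j < m then D i j else 0) (\<lambda>j. if j < m then \<phi> j else 0)"
  shows "in_row_space l D \<phi>"
proof -
  obtain \<psi> where \<psi>: "\<psi> \<in> vspace l" "\<And>j. (\<Sum>i<l. \<psi> i * (if j < m then D i j else 0)) = (if j < m then \<phi> j else 0)"
    using row unfolding in_row_space_def by blast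
  have "(\<Sum>i<l. \<psi> i * D i j) = \<phi> j" for j
  proof -
    consider "j < m" | "j = m" | "m < j" by linarith
    then show ?thesis
    proof cases
      case 1 then show ?thesis using \<psi>(2)[of j] by simp
    next
      case 2 then show ?thesis using z \<phi>m by simp
    next
      case 3 then show ?thesis using mat_onD[OF D] \<phi> unfolding vspace_def by simp
    qed
  qed
  then show ?thesis using \<psi>(1) unfolding in_row_space_def by blast
qed

text \<open>Gaussian elimination of the last column against a pivot row p.\<close>

lemma vanishes_on_kernel_pivot:
  fixes D :: "('k::field) mat"
  assumes Dp: "D p m \<noteq> 0" and van: "vanishes_on_kernel (Suc m) D \<phi>"
  defines "D' \<equiv> \<lambda>i j. if i = p \<or> m \<le> j then 0 else D i j - D i m / D p m * D p j"
    and "\<phi>' \<equiv> \<lambda>j. if j < m then \<phi> j - \<phi> m / D p m * D p j else 0"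
  shows "vanishes_on_kernel m D' \<phi>'"
  unfolding vanishes_on_kernel_def
proof (intro ballI impI)
  fix x :: "'k vec" assume x: "x \<in> vspace m" and zx: "mvec m D' x = (\<lambda>_. 0)"
  define t where "t = (\<Sum>j<m. D p j * x j)"
  define x' where "x' = x(m := - t / D p m)"
  have xs: "x' \<in> vspace (Suc m)" using x unfolding vspace_def x'_def by auto
  have sx: "(\<Sum>j<m. f j * x' j) = (\<Sum>j<m. f j * x j)" for f
    unfolding x'_def by (rule sum.cong) auto
  have "mvec (Suc m) D x' = (\<lambda>_. 0)"
  proof (intro ext)
    fix i
    have e: "mvec (Suc m) D x' i = (\<Sum>j<m. D i j * x j) - D i m / D p m * t"
      unfolding mvec_def using Dp by (simp add: sx x'_def)
    show "mvec (Suc m) D x' i = 0"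
    proof (cases "i = p")
      case True then show ?thesis unfolding e t_def using Dp by simp
    next
      case False
      have "(\<Sum>j<m. D i j * x j) - D i m / D p m * t = mvec m D' x i"
        unfolding mvec_def D'_def t_def using False
        by (simp add: sum_distrib_left sum_subtractf[symmetric] algebra_simps)
      then show ?thesis using e zx by (metis)
    qed
  qed
  then have "(\<Sum>j<Suc m. \<phi> j * x' j) = 0" using van xs unfolding vanishes_on_kernel_def by blast
  then have "(\<Sum>j<m. \<phi> j * x j) + \<phi> m * (- t / D p m) = 0" by (simp add: sx x'_def)
  moreover have "(\<Sum>j<m. \<phi>' j * x j) = (\<Sum>j<m. \<phi> j * x j) - (\<phi> m / D p m) * t"
    unfolding \<phi>'_def t_def by (simp add: sum_distrib_left sum_subtractf[symmetric] algebra_simps)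
  ultimately show "(\<Sum>j<m. \<phi>' j * x j) = 0" by (simp add: algebra_simps)
qed

lemma in_row_space_pivot:
  fixes D :: "('k::field) mat"
  assumes D: "mat_on l (Suc m) D" and \<phi>: "\<phi> \<in> vspace (Suc m)" and Dp: "D p m \<noteq> 0"
  defines "D' \<equiv> \<lambda>i j. if i = p \<or> m \<le> j then 0 else D i j - D i m / D p m * D p j"
    and "\<phi>' \<equiv> \<lambda>j. if j < m then \<phi> j - \<phi> m / D p m * D p j else 0"
  assumes row: "in_row_space l D' \<phi>'"
  shows "in_row_space l D \<phi>"
proof -
  have pl: "p < l" using mat_onD[OF D] Dp by (meson not_le)
  obtain \<psi>' where \<psi>': "\<psi>' \<in> vspace l" "\<And>j. (\<Sum>i<l. \<psi>' i * D' i j) = \<phi>' j"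
    using row unfolding in_row_space_def by blast
  define s where "s = (\<Sum>i<l. if i = p then 0 else \<psi>' i * D i m)"
  define \<psi> where "\<psi> = (\<lambda>i. if i = p then (\<phi> m - s) / D p m else \<psi>' i)"
  have \<psi>v: "\<psi> \<in> vspace l" using \<psi>'(1) pl unfolding \<psi>_def vspace_def by auto
  have split: "(\<Sum>i<l. \<psi> i * D i j) = (\<phi> m - s) / D p m * D p j + (\<Sum>i<l. if i = p then 0 else \<psi>' i * D i j)" for j
    using sum_pick[OF pl, of "\<lambda>i. \<psi> i * D i j"] unfolding \<psi>_def by (simp cong: if_cong)
  have "(\<Sum>i<l. \<psi> i * D i j) = \<phi> j" for j
  proof -
    consider "j < m" | "j = m" | "m < j" by linarith
    then show ?thesis
    proof cases
      case 1
      have "\<phi>' j = (\<Sum>i<l. \<psi>' i * D' i j)" using \<psi>'(2) by simp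
      also have "\<dots> = (\<Sum>i<l. (if i = p then 0 else \<psi>' i * D i j) - D p j / D p m * (if i = p then 0 else \<psi>' i * D i m))"
        using 1 by (intro sum.cong) (auto simp: D'_def field_simps)
      also have "\<dots> = (\<Sum>i<l. if i = p then 0 else \<psi>' i * D i j) - D p j * (s / D p m)"
        unfolding sum_subtractf sum_distrib_left[symmetric] s_def by simp
      finally have "(\<Sum>i<l. if i = p then 0 else \<psi>' i * D i j) = \<phi>' j + D p j * (s / D p m)" by simp
      then show ?thesis unfolding split using 1 Dp unfolding \<phi>'_def by (simp add: field_simps)
    next
      case 2
      show ?thesis using Dp unfolding split 2 by (simp add: s_def)
    next
      case 3 then show ?thesis using mat_onD[OF D] \<phi> unfolding vspace_def by simp
    qed
  qed
  then show ?thesis using \<psi>v unfolding in_row_space_def by blast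
qed

lemma functional_in_row_space:
  fixes D :: "('k::field) mat"
  assumes "mat_on l m D" "\<phi> \<in> vspace m" "vanishes_on_kernel m D \<phi>"
  shows "in_row_space l D \<phi>"
  using assms
proof (induction m arbitrary: D \<phi>)
  case 0
  then have "\<phi> = (\<lambda>_. 0)" "D i j = 0" for i j unfolding vspace_def mat_on_def by auto
  then show ?case unfolding in_row_space_def by (intro bexI[of _ "\<lambda>_. 0"]) (auto simp: vspace_def)
next
  case (Suc m)
  show ?case
  proof (cases "\<forall>i. D i m = 0")
    case True
    note van = vanishes_on_kernel_zero_col[OF True Suc.prems(3)]
    have "in_row_space l (\<lambda>i j. if j < m then D i j else 0) (\<lambda>j. if j < m then \<phi> j else 0)"
      by (rule Suc.IH) (use Suc.prems(1) van(2) in \<open>auto simp: mat_on_def vspace_def\<close>)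
    then show ?thesis by (rule in_row_space_zero_col[OF Suc.prems(1,2) True van(1)])
  next
    case False
    then obtain p where Dp: "D p m \<noteq> 0" by blast
    have "in_row_space l (\<lambda>i j. if i = p \<or> m \<le> j then 0 else D i j - D i m / D p m * D p j)
        (\<lambda>j. if j < m then \<phi> j - \<phi> m / D p m * D p j else 0)"
      by (rule Suc.IH) (use Suc.prems(1) vanishes_on_kernel_pivot[OF Dp Suc.prems(3)] in \<open>auto simp: mat_on_def vspace_def\<close>)
    then show ?thesis by (rule in_row_space_pivot[OF Suc.prems(1,2) Dp])
  qed
qed

lemma mvec_add_vec: "mvec n A (\<lambda>q. x q + y q) = (\<lambda>i. mvec n A x i + mvec n A y i)"
  unfolding mvec_def by (auto intro!: ext simp: algebra_simps sum.distrib)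

lemma mvec_diff_vec: "mvec n A (\<lambda>q. x q - y q) = (\<lambda>i. mvec n A x i - mvec n A y i)"
  for A :: "('k::field) mat"
  unfolding mvec_def by (auto intro!: ext simp: algebra_simps sum_subtractf)

lemma mvec_scale_vec: "mvec n A (\<lambda>q. c * x q) = (\<lambda>i. c * mvec n A x i)"
  unfolding mvec_def by (auto intro!: ext simp: algebra_simps sum_distrib_left)

lemma mvec_unit: "p < n \<Longrightarrow> mvec n A (\<lambda>j. if j = p then 1 else 0) = (\<lambda>i. A i p)"
  unfolding mvec_def by (auto intro!: ext simp: if_distrib[of "\<lambda>x. _ * x"] cong: if_cong)

definition coord_subspace :: "nat \<Rightarrow> ('k::field) vec set \<Rightarrow> bool" where
  "coord_subspace N W \<longleftrightarrow> W \<subseteq> vspace N \<and> (\<lambda>_. 0) \<in> W \<and>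
     (\<forall>x\<in>W. \<forall>y\<in>W. (\<lambda>i. x i + y i) \<in> W) \<and> (\<forall>c. \<forall>x\<in>W. (\<lambda>i. c * x i) \<in> W)"

definition basis_mat :: "nat \<Rightarrow> nat \<Rightarrow> ('k::field) mat \<Rightarrow> 'k vec set \<Rightarrow> bool" where
  "basis_mat N r B W \<longleftrightarrow> mat_on N r B \<and> (\<forall>w\<in>vspace r. mvec r B w = (\<lambda>_. 0) \<longrightarrow> w = (\<lambda>_. 0)) \<and>
     (\<forall>x. x \<in> W \<longleftrightarrow> (\<exists>w\<in>vspace r. mvec r B w = x))"

lemma coord_subspace_kernel: "coord_subspace N {x \<in> vspace N. mvec N E x = (\<lambda>_. 0)}"
  unfolding coord_subspace_def by (auto simp: vspace_def mvec_add_vec mvec_scale_vec mvec_zero_vec)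

lemma coord_subspace_last_zero:
  assumes "coord_subspace (Suc N) W"
  shows "coord_subspace N {x \<in> W. x N = 0}"
proof -
  have "x i = 0" if "x \<in> W" "x N = 0" "N \<le> i" for x i
  proof (cases "i = N")
    case False
    then have "Suc N \<le> i" using that(3) by simp
    then show ?thesis using assms that(1) unfolding coord_subspace_def vspace_def by blast
  qed (use that in simp)
  then show ?thesis using assms unfolding coord_subspace_def vspace_def by auto
qed

lemma basis_mat_extend:
  fixes B0 :: "('k::field) mat"
  assumes W: "coord_subspace (Suc N) W" and w: "w \<in> W" "w N \<noteq> 0"
    and B0: "basis_mat N r0 B0 {x \<in> W. x N = 0}"
  shows "basis_mat (Suc N) (Suc r0) (\<lambda>i j. if j < r0 then B0 i j else if j = r0 then w i else 0) W"
proof -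
  define B where "B = (\<lambda>i j. if j < r0 then B0 i j else if j = r0 then w i else (0::'k))"
  from B0 have mo0: "mat_on N r0 B0" and inj0: "\<forall>z\<in>vspace r0. mvec r0 B0 z = (\<lambda>_. 0) \<longrightarrow> z = (\<lambda>_. 0)"
    and sp0: "\<forall>x. x \<in> {x \<in> W. x N = 0} \<longleftrightarrow> (\<exists>z\<in>vspace r0. mvec r0 B0 z = x)"
    unfolding basis_mat_def by auto
  have add: "\<forall>x\<in>W. \<forall>y\<in>W. (\<lambda>i. x i + y i) \<in> W" and scale: "\<forall>c. \<forall>x\<in>W. (\<lambda>i. c * x i) \<in> W"
    and wv: "w \<in> vspace (Suc N)" using W w unfolding coord_subspace_def by auto
  have mvB: "mvec (Suc r0) B z = (\<lambda>i. mvec r0 B0 z i + z r0 * w i)" for z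
  proof (intro ext)
    fix i
    have "(\<Sum>j<r0. B i j * z j) = (\<Sum>j<r0. B0 i j * z j)" unfolding B_def by (rule sum.cong) auto
    then show "mvec (Suc r0) B z i = mvec r0 B0 z i + z r0 * w i"
      unfolding mvec_def by (simp add: B_def mult.commute)
  qed
  have rv: "(\<lambda>j. if j < r0 then z j else 0) \<in> vspace r0" for z :: "'k vec" unfolding vspace_def by auto
  have B0W: "mvec r0 B0 z \<in> W" and B0N: "mvec r0 B0 z N = 0" for z
    using sp0 mvec_restrict[of r0 B0 z] rv[of z] by auto
  have "mat_on (Suc N) (Suc r0) B"
    using mo0 wv unfolding B_def mat_on_def vspace_def by auto
  moreover have "\<forall>z\<in>vspace (Suc r0). mvec (Suc r0) B z = (\<lambda>_. 0) \<longrightarrow> z = (\<lambda>_. 0)"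
  proof (intro ballI impI)
    fix z :: "'k vec" assume z: "z \<in> vspace (Suc r0)" and e: "mvec (Suc r0) B z = (\<lambda>_. 0)"
    have "z r0 * w N = 0" using fun_cong[OF e[unfolded mvB], of N] B0N[of z] by simp
    then have zr: "z r0 = 0" using w(2) by simp
    then have "mvec r0 B0 (\<lambda>j. if j < r0 then z j else 0) = (\<lambda>_. 0)"
      using e mvec_restrict[of r0 B0 z] unfolding mvB by (auto simp: fun_eq_iff)
    then have z0: "(\<lambda>j. if j < r0 then z j else 0) = (\<lambda>_. 0)" using inj0 rv by blast
    have "z j = 0" for j
      using fun_cong[OF z0, of j] zr z unfolding vspace_def by (cases j r0 rule: linorder_cases) auto
    then show "z = (\<lambda>_. 0)" by blast
  qed
  moreover have "\<forall>x. x \<in> W \<longleftrightarrow> (\<exists>z\<in>vspace (Suc r0). mvec (Suc r0) B z = x)"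
  proof (intro allI iffI)
    fix x assume x: "x \<in> W"
    define c where "c = x N / w N"
    have "(\<lambda>i. (- c) * w i) \<in> W" using scale w(1) by blast
    from add[rule_format, OF x this] have "(\<lambda>i. x i + (- c) * w i) \<in> W" by simp
    then have "(\<lambda>i. x i + (- c) * w i) \<in> {x \<in> W. x N = 0}" using w(2) by (auto simp: c_def)
    then obtain z0 where z0: "z0 \<in> vspace r0" "mvec r0 B0 z0 = (\<lambda>i. x i + (- c) * w i)"
      using sp0 by blast
    define z where "z = z0(r0 := c)"
    have "z \<in> vspace (Suc r0)" using z0(1) unfolding z_def vspace_def by auto
    moreover have "mvec r0 B0 z = mvec r0 B0 z0" unfolding z_def mvec_def by (intro ext sum.cong) auto
    then have "mvec (Suc r0) B z = x" unfolding mvB z0(2) by (auto simp: z_def fun_eq_iff)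
    ultimately show "\<exists>z\<in>vspace (Suc r0). mvec (Suc r0) B z = x" by blast
  next
    fix x assume "\<exists>z\<in>vspace (Suc r0). mvec (Suc r0) B z = x"
    then obtain z where "x = (\<lambda>i. mvec r0 B0 z i + z r0 * w i)" unfolding mvB by blast
    then show "x \<in> W" using add scale B0W[of z] w(1) by simp
  qed
  ultimately show ?thesis unfolding basis_mat_def B_def by blast
qed

lemma subspace_basis: "coord_subspace N W \<Longrightarrow> \<exists>r B. basis_mat N r B W"
proof (induction N arbitrary: W)
  case 0
  then have "W = {\<lambda>_. 0}" unfolding coord_subspace_def vspace_def by auto
  then show ?case
    by (intro exI[of _ 0] exI[of _ "\<lambda>_ _. 0"]) (auto simp: basis_mat_def mat_on_def vspace_def mvec_def)
next
  case (Suc N)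
  obtain r0 B0 where B0: "basis_mat N r0 B0 {x \<in> W. x N = 0}"
    using Suc.IH[OF coord_subspace_last_zero[OF Suc.prems]] by blast
  show ?case
  proof (cases "\<exists>w\<in>W. w N \<noteq> 0")
    case False
    then have "{x \<in> W. x N = 0} = W" by auto
    then have "basis_mat N r0 B0 W" using B0 by simp
    then have "basis_mat (Suc N) r0 B0 W" unfolding basis_mat_def mat_on_def by auto
    then show ?thesis by blast
  next
    case True
    then obtain w where "w \<in> W" "w N \<noteq> 0" by blast
    from basis_mat_extend[OF Suc.prems this B0] show ?thesis by blast
  qed
qed

lemma kernel_basis:
  fixes E :: "('v, 'k::field) hom"
  shows "\<exists>k \<iota>. \<forall>y. basis_mat (N y) (k y) (\<iota> y) {x \<in> vspace (N y). mvec (N y) (E y) x = (\<lambda>_. 0)}"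
proof -
  have "\<exists>r B. basis_mat (N y) r B {x \<in> vspace (N y). mvec (N y) (E y) x = (\<lambda>_. 0)}" for y
    by (rule subspace_basis[OF coord_subspace_kernel])
  then have "\<forall>y. \<exists>rB. basis_mat (N y) (fst rB) (snd rB) {x \<in> vspace (N y). mvec (N y) (E y) x = (\<lambda>_. 0)}"
    by (simp add: split_paired_Ex)
  from choice[OF this] obtain f
    where "\<forall>y. basis_mat (N y) (fst (f y)) (snd (f y)) {x \<in> vspace (N y). mvec (N y) (E y) x = (\<lambda>_. 0)}"
    by blast
  then show ?thesis by (intro exI[of _ "\<lambda>y. fst (f y)"] exI[of _ "\<lambda>y. snd (f y)"])
qed

section \<open>The injective representation at a vertex\<close>

text \<open>inj_rep v is the injective envelope I_v of the simple at v. Coordinate 0 at v spans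
  its socle; every arrow b into v contributes the coordinate inj_pos b at src b, which b
  maps onto the socle.\<close>

definition in_block :: "('a::finite \<Rightarrow> 'v) \<Rightarrow> ('a \<Rightarrow> 'v) \<Rightarrow> 'v \<Rightarrow> 'v \<Rightarrow> nat \<Rightarrow> nat" where
  "in_block src tgt v x s = (if src (arrow_enum s) = x \<and> tgt (arrow_enum s) = v then 1 else 0)"

definition in_mult :: "('a::finite \<Rightarrow> 'v) \<Rightarrow> ('a \<Rightarrow> 'v) \<Rightarrow> 'v \<Rightarrow> 'v \<Rightarrow> nat" where
  "in_mult src tgt v x = prefix_sum (in_block src tgt v x) (card (UNIV::'a set))"

definition inj_dim :: "('a::finite \<Rightarrow> 'v) \<Rightarrow> ('a \<Rightarrow> 'v) \<Rightarrow> 'v \<Rightarrow> 'v \<Rightarrow> nat" where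
  "inj_dim src tgt v x = (if x = v then 1 else 0) + in_mult src tgt v x"

definition inj_pos :: "('a::finite \<Rightarrow> 'v) \<Rightarrow> ('a \<Rightarrow> 'v) \<Rightarrow> 'v \<Rightarrow> 'a \<Rightarrow> nat" where
  "inj_pos src tgt v b = (if src b = v then 1 else 0) + prefix_sum (in_block src tgt v (src b)) (arrow_idx b)"

definition inj_act :: "('a::finite \<Rightarrow> 'v) \<Rightarrow> ('a \<Rightarrow> 'v) \<Rightarrow> 'v \<Rightarrow> 'a \<Rightarrow> ('k::field) mat" where
  "inj_act src tgt v a = (\<lambda>i j. if tgt a = v \<and> i = 0 \<and> j = inj_pos src tgt v a then 1 else 0)"

definition inj_rep :: "('a::finite \<Rightarrow> 'v) \<Rightarrow> ('a \<Rightarrow> 'v) \<Rightarrow> 'v \<Rightarrow> ('v, 'a, 'k::field) rep" where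
  "inj_rep src tgt v = (inj_dim src tgt v, inj_act src tgt v)"

lemma rdim_inj_rep[simp]: "rdim (inj_rep src tgt v) = inj_dim src tgt v"
  unfolding inj_rep_def rdim_def by simp

lemma ract_inj_rep[simp]: "ract (inj_rep src tgt v) = inj_act src tgt v"
  unfolding inj_rep_def ract_def by simp

lemma in_block_arrow_idx: "tgt b = v \<Longrightarrow> in_block src tgt v (src b) (arrow_idx b) = 1"
  unfolding in_block_def by simp

lemma inj_pos_bound: "tgt b = v \<Longrightarrow> inj_pos src tgt v b < inj_dim src tgt v (src b)"
  unfolding inj_pos_def inj_dim_def in_mult_def
  using prefix_sum_bound[OF arrow_idx_lt[of b], of 0 "in_block src tgt v (src b)"]
    in_block_arrow_idx[where tgt=tgt and b=b and v=v and src=src]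
  by auto

lemma inj_pos_nz: "src b = v \<Longrightarrow> inj_pos src tgt v b \<noteq> 0"
  unfolding inj_pos_def by simp

lemma inj_dim_v_pos: "0 < inj_dim src tgt v v"
  unfolding inj_dim_def by simp

lemma inj_pos_inj:
  assumes "src b = src b'" "tgt b = v" "tgt b' = v" "inj_pos src tgt v b = inj_pos src tgt v b'"
  shows "b = b'"
proof -
  have "prefix_sum (in_block src tgt v (src b)) (arrow_idx b) + 0 =
      prefix_sum (in_block src tgt v (src b)) (arrow_idx b') + 0"
    using assms unfolding inj_pos_def by simp
  then have "arrow_idx b = arrow_idx b'"
    using prefix_sum_unique[of 0 "in_block src tgt v (src b)" "arrow_idx b" 0 "arrow_idx b'"]
      in_block_arrow_idx[where tgt=tgt and b=b and v=v and src=src]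
      in_block_arrow_idx[where tgt=tgt and b=b' and v=v and src=src] assms
    by auto
  then show ?thesis by (rule arrow_idx_inj)
qed

lemma inj_row_cases:
  fixes src tgt :: "'a::finite \<Rightarrow> 'v"
  obtains (socle) "x = v" "i = 0"
  | (arrow) b where "src b = x" "tgt b = v" "i = inj_pos src tgt v b"
  | (out) "\<not> (x = v \<and> i = 0)" "inj_dim src tgt v x \<le> i"
proof (cases "x = v \<and> i = 0")
  case False
  show thesis
  proof (cases "i < inj_dim src tgt v x")
    case True
    define i' where "i' = i - (if x = v then 1 else 0)"
    have "i' < prefix_sum (in_block src tgt v x) (card (UNIV::'a set))"
      using True False unfolding i'_def inj_dim_def in_mult_def by (auto split: if_splits)
    from prefix_sum_decode[OF this] obtain s l where s: "s < card (UNIV::'a set)" "l < in_block src tgt v x s"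
      "i' = prefix_sum (in_block src tgt v x) s + l" by blast
    define b where "b = (arrow_enum s :: 'a)"
    have sb: "arrow_idx b = s" unfolding b_def using s(1) by (rule arrow_idx_arrow_enum)
    have b: "src b = x" "tgt b = v" and l: "l = 0" using s(2) unfolding in_block_def b_def by (auto split: if_splits)
    have "i = inj_pos src tgt v b"
      unfolding inj_pos_def b(1) sb using s(3) l False unfolding i'_def by (auto split: if_splits)
    with b show thesis by (rule arrow)
  qed (use False out in simp)
qed (use socle in simp)

definition inj_arrow :: "('a::finite \<Rightarrow> 'v) \<Rightarrow> ('a \<Rightarrow> 'v) \<Rightarrow> 'v \<Rightarrow> 'v \<Rightarrow> nat \<Rightarrow> 'a" where
  "inj_arrow src tgt v x i = (SOME b. src b = x \<and> tgt b = v \<and> i = inj_pos src tgt v b)"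

lemma inj_arrow_inj_pos:
  assumes "src b = x" "tgt b = v"
  shows "inj_arrow src tgt v x (inj_pos src tgt v b) = b"
proof -
  have "src (inj_arrow src tgt v x (inj_pos src tgt v b)) = x \<and> tgt (inj_arrow src tgt v x (inj_pos src tgt v b)) = v \<and>
      inj_pos src tgt v b = inj_pos src tgt v (inj_arrow src tgt v x (inj_pos src tgt v b))"
    unfolding inj_arrow_def by (rule someI[of _ b]) (use assms in simp)
  then show ?thesis
    using inj_pos_inj[where b=b and b'="inj_arrow src tgt v x (inj_pos src tgt v b)" and tgt=tgt and v=v and src=src] assms
    by auto
qed

lemma is_rep_inj_rep: "is_rep src tgt (inj_rep src tgt v :: ('v, 'a::finite, 'k::field) rep)"
  unfolding is_rep_def
proof (intro conjI allI impI)
  fix a :: 'a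
  show "mat_on (rdim (inj_rep src tgt v) (tgt a)) (rdim (inj_rep src tgt v) (src a))
      (ract (inj_rep src tgt v :: ('v, 'a, 'k) rep) a)"
    unfolding mat_on_def rdim_inj_rep ract_inj_rep inj_act_def using inj_pos_bound[where b=a and v=v and src=src and tgt=tgt]
    by (auto simp: inj_dim_def)
next
  fix a b :: 'a assume ab: "tgt a = src b"
  show "mmul (rdim (inj_rep src tgt v) (tgt a)) (ract (inj_rep src tgt v :: ('v, 'a, 'k) rep) b)
      (ract (inj_rep src tgt v :: ('v, 'a, 'k) rep) a) = (\<lambda>_ _. 0)"
    unfolding mmul_def ract_inj_rep inj_act_def using ab inj_pos_nz[where b=b and v=v and src=src and tgt=tgt]
    by (auto intro!: ext sum.neutral)
qed

lemma mmul_inj_act: "mmul (inj_dim src tgt v (src c)) (inj_act src tgt v c) B i j =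
   (if tgt c = v \<and> i = 0 then B (inj_pos src tgt v c) j else 0)"
proof (cases "tgt c = v \<and> i = 0")
  case True
  then have "inj_pos src tgt v c < inj_dim src tgt v (src c)"
    using inj_pos_bound[where b=c and v=v and src=src and tgt=tgt] by simp
  then show ?thesis unfolding mmul_def inj_act_def using True
    by (simp add: if_distrib[of "\<lambda>x. x * _"] sum.delta' cong: if_cong)
next
  case False then show ?thesis unfolding mmul_def inj_act_def by auto
qed

text \<open>Hom(M, I_v) is the dual of the space of M at v: inj_hom M v \<phi> is the homomorphism
  corresponding to the functional \<phi> on that space.\<close>

definition inj_hom :: "('a::finite \<Rightarrow> 'v) \<Rightarrow> ('a \<Rightarrow> 'v) \<Rightarrow> ('v, 'a, 'k::field) rep \<Rightarrow> 'v \<Rightarrow> 'k vec \<Rightarrow> ('v, 'k) hom" where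
  "inj_hom src tgt M v \<phi> = (\<lambda>x i j. if x = v \<and> i = 0 then \<phi> j else if i < inj_dim src tgt v x then
      mmul (rdim M v) (\<lambda>_. \<phi>) (ract M (inj_arrow src tgt v x i)) 0 j else 0)"

lemma inj_hom_top: "inj_hom src tgt M v \<phi> v 0 j = \<phi> j"
  unfolding inj_hom_def by simp

lemma inj_hom_arr:
  assumes "src b = x" "tgt b = v"
  shows "inj_hom src tgt M v \<phi> x (inj_pos src tgt v b) j = mmul (rdim M v) (\<lambda>_. \<phi>) (ract M b) 0 j"
  using assms inj_pos_nz[where b=b and v=v and src=src and tgt=tgt] inj_pos_bound[where b=b and v=v and src=src and tgt=tgt]
    inj_arrow_inj_pos[where src=src and tgt=tgt, OF assms]
  unfolding inj_hom_def by auto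

lemma inj_hom_out: "\<not> (x = v \<and> i = 0) \<Longrightarrow> inj_dim src tgt v x \<le> i \<Longrightarrow> inj_hom src tgt M v \<phi> x i j = 0"
  unfolding inj_hom_def by auto

lemma mat_on_inj_hom:
  fixes M :: "('v, 'a::finite, 'k::field) rep"
  assumes M: "is_rep src tgt M" and phi: "\<phi> \<in> vspace (rdim M v)"
  shows "mat_on (inj_dim src tgt v x) (rdim M x) (inj_hom src tgt M v \<phi> x)"
  unfolding mat_on_def
proof (intro allI impI)
  fix i j assume ij: "inj_dim src tgt v x \<le> i \<or> rdim M x \<le> j"
  show "inj_hom src tgt M v \<phi> x i j = 0"
  proof (cases rule: inj_row_cases[where src=src and tgt=tgt and x=x and v=v and i=i])
    case socle
    then show ?thesis using ij inj_dim_v_pos[of src tgt v] phi unfolding vspace_def by (auto simp: inj_hom_top)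
  next
    case (arrow b)
    then have "rdim M x \<le> j" using ij inj_pos_bound[of tgt b v src] by auto
    then show ?thesis unfolding arrow(3) inj_hom_arr[where src=src and tgt=tgt, OF arrow(1,2)] mmul_def
      using mat_onD[OF is_repD(1)[OF M, of b]] arrow(1) by simp
  next
    case out
    then show ?thesis by (rule inj_hom_out)
  qed
qed

lemma inj_hom_commutes:
  fixes M :: "('v, 'a::finite, 'k::field) rep"
  assumes M: "is_rep src tgt M"
  shows "mmul (rdim M (tgt c)) (inj_hom src tgt M v \<phi> (tgt c)) (ract M c) =
    mmul (inj_dim src tgt v (src c)) (inj_act src tgt v c) (inj_hom src tgt M v \<phi> (src c))"
proof (intro ext)
  fix i j
  show "mmul (rdim M (tgt c)) (inj_hom src tgt M v \<phi> (tgt c)) (ract M c) i j =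
    mmul (inj_dim src tgt v (src c)) (inj_act src tgt v c) (inj_hom src tgt M v \<phi> (src c)) i j"
  proof (cases rule: inj_row_cases[where src=src and tgt=tgt and x="tgt c" and v=v and i=i])
    case socle
    have "mmul (inj_dim src tgt v (src c)) (inj_act src tgt v c) (inj_hom src tgt M v \<phi> (src c)) i j =
        inj_hom src tgt M v \<phi> (src c) (inj_pos src tgt v c) j"
      unfolding mmul_inj_act using socle by simp
    also have "\<dots> = mmul (rdim M v) (\<lambda>_. \<phi>) (ract M c) 0 j"
      by (rule inj_hom_arr[where src=src and tgt=tgt, OF refl socle(1)])
    also have "\<dots> = mmul (rdim M (tgt c)) (inj_hom src tgt M v \<phi> (tgt c)) (ract M c) i j"
      unfolding mmul_def using socle by (simp add: inj_hom_top)
    finally show ?thesis by simp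
  next
    case (arrow b)
    text \<open>The path c b acts as zero.\<close>
    have "mmul (rdim M (tgt c)) (inj_hom src tgt M v \<phi> (tgt c)) (ract M c) i j
        = mmul (rdim M (tgt c)) (mmul (rdim M v) (\<lambda>_. \<phi>) (ract M b)) (ract M c) 0 j"
      unfolding arrow(3) mmul_def[of "rdim M (tgt c)"] inj_hom_arr[where src=src and tgt=tgt, OF arrow(1,2)] ..
    also have "\<dots> = mmul (rdim M v) (\<lambda>_. \<phi>) (mmul (rdim M (tgt c)) (ract M b) (ract M c)) 0 j"
      by (rule mmul_assoc[THEN fun_cong, THEN fun_cong])
    also have "\<dots> = 0"
      unfolding is_repD(2)[OF M arrow(1)[symmetric]] by (simp add: mmul_def)
    also have "0 = mmul (inj_dim src tgt v (src c)) (inj_act src tgt v c) (inj_hom src tgt M v \<phi> (src c)) i j"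
    proof -
      have ne: "\<not> (tgt c = v \<and> i = 0)" using arrow inj_pos_nz[where b=b and v=v and src=src and tgt=tgt] by metis
      show ?thesis unfolding mmul_inj_act if_not_P[OF ne] ..
    qed
    finally show ?thesis .
  next
    case out
    have "mmul (rdim M (tgt c)) (inj_hom src tgt M v \<phi> (tgt c)) (ract M c) i j = 0"
      unfolding mmul_def using out by (simp add: inj_hom_out)
    then show ?thesis unfolding mmul_inj_act if_not_P[OF out(1)] .
  qed
qed

lemma is_hom_inj_hom:
  fixes M :: "('v, 'a::finite, 'k::field) rep"
  assumes M: "is_rep src tgt M" and phi: "\<phi> \<in> vspace (rdim M v)"
  shows "is_hom src tgt M (inj_rep src tgt v) (inj_hom src tgt M v \<phi>)"
  unfolding is_hom_def rdim_inj_rep ract_inj_rep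
  by (intro conjI allI M is_rep_inj_rep mat_on_inj_hom[OF M phi] inj_hom_commutes[OF M])

lemma inj_hom_top_row:
  fixes M :: "('v, 'a::finite, 'k::field) rep"
  assumes f: "is_hom src tgt M (inj_rep src tgt v) f"
  shows "f = inj_hom src tgt M v (\<lambda>j. f v 0 j)"
proof (intro ext)
  fix x i j
  show "f x i j = inj_hom src tgt M v (\<lambda>j. f v 0 j) x i j"
  proof (cases rule: inj_row_cases[where src=src and tgt=tgt and x=x and v=v and i=i])
    case socle then show ?thesis by (simp add: inj_hom_top)
  next
    case (arrow b)
    have "f x i j = mmul (inj_dim src tgt v (src b)) (inj_act src tgt v b) (f (src b)) 0 j"
      unfolding mmul_inj_act using arrow by simp
    also have "\<dots> = mmul (rdim M (tgt b)) (f (tgt b)) (ract M b) 0 j" using is_homD(4)[OF f, of b] by simp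
    also have "\<dots> = inj_hom src tgt M v (\<lambda>j. f v 0 j) x i j"
      unfolding arrow(3) inj_hom_arr[where src=src and tgt=tgt, OF arrow(1,2)] mmul_def arrow(2) by simp
    finally show ?thesis .
  next
    case out
    then show ?thesis using mat_onD[OF is_homD(3)[OF f, of x], of i j] by (simp add: inj_hom_out)
  qed
qed

lemma inj_hom_comp:
  fixes M :: "('v, 'a::finite, 'k::field) rep"
  assumes f: "is_hom src tgt L M f" and phi: "\<phi> \<in> vspace (rdim M v)"
  shows "hcomp M (inj_hom src tgt M v \<phi>) f = inj_hom src tgt L v (\<lambda>j. \<Sum>k<rdim M v. \<phi> k * f v k j)"
proof -
  have M: "is_rep src tgt M" using f by (rule is_homD)
  have h: "is_hom src tgt L (inj_rep src tgt v) (hcomp M (inj_hom src tgt M v \<phi>) f)"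
    by (rule is_hom_comp[OF f is_hom_inj_hom[OF M phi]])
  have "hcomp M (inj_hom src tgt M v \<phi>) f = inj_hom src tgt L v (\<lambda>j. hcomp M (inj_hom src tgt M v \<phi>) f v 0 j)"
    by (rule inj_hom_top_row[OF h])
  also have "(\<lambda>j. hcomp M (inj_hom src tgt M v \<phi>) f v 0 j) = (\<lambda>j. \<Sum>k<rdim M v. \<phi> k * f v k j)"
    unfolding hcomp_def mmul_def by (simp add: inj_hom_top)
  finally show ?thesis .
qed

text \<open>Since Hom(-, I_v) is the exact functor of taking duals at v, it has no higher Ext:
  a cocycle is a functional on P_i vanishing on the image of d_i, hence on the kernel of
  d_(i-1), so it is a combination of rows of d_(i-1).\<close>

lemma vanishes_on_kernel_exact:
  fixes D0 D1 :: "('v, 'k::field) hom" and A B :: "('v, 'a, 'k) rep"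
  assumes ex: "exact_at A B D1 D0"
    and z: "\<And>c. (\<Sum>k<rdim B v. \<phi> k * D1 v k c) = 0"
  shows "vanishes_on_kernel (rdim B v) (D0 v) \<phi>"
  unfolding vanishes_on_kernel_def
proof (intro ballI impI)
  fix x :: "'k vec" assume "x \<in> vspace (rdim B v)" "mvec (rdim B v) (D0 v) x = (\<lambda>_. 0)"
  then obtain y where y: "mvec (rdim A v) (D1 v) y = x" using ex unfolding exact_at_def by blast
  have "(\<Sum>j<rdim B v. \<phi> j * x j) = (\<Sum>j<rdim B v. \<phi> j * (\<Sum>c<rdim A v. D1 v j c * y c))"
    unfolding y[symmetric] mvec_def ..
  also have "\<dots> = (\<Sum>c<rdim A v. (\<Sum>j<rdim B v. \<phi> j * D1 v j c) * y c)"
    by (simp add: sum_distrib_left sum_distrib_right mult.assoc sum.swap[of _ "{..<rdim B v}"])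
  also have "\<dots> = 0" using z by simp
  finally show "(\<Sum>j<rdim B v. \<phi> j * x j) = 0" .
qed

lemma Ext_zero_inj_rep:
  fixes Y :: "('v, 'a::finite, 'k::field) rep"
  assumes i: "0 < i"
  shows "Ext_zero src tgt i Y (inj_rep src tgt v)"
  unfolding Ext_zero_def
proof (intro allI impI)
  fix P d e g
  assume R: "proj_resolution src tgt Y P d e"
    and g: "is_hom src tgt (P i) (inj_rep src tgt v) g \<and> hcomp (P i) g (d i) = zero_hom"
  obtain i' where ii: "i = Suc i'" using i by (cases i) auto
  have gh: "is_hom src tgt (P i) (inj_rep src tgt v) g" using g by simp
  have ex: "exact_at (P (Suc i)) (P i) (d i) (d i')" using R ii unfolding proj_resolution_def by auto
  have di': "is_hom src tgt (P i) (P i') (d i')" using R ii unfolding proj_resolution_def by auto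
  define \<phi> where "\<phi> = (\<lambda>j. g v 0 j)"
  have phiv: "\<phi> \<in> vspace (rdim (P i) v)"
    using mat_onD[OF is_homD(3)[OF gh, of v]] unfolding \<phi>_def vspace_def by auto
  have "(\<Sum>k<rdim (P i) v. \<phi> k * d i v k c) = 0" for c
    using fun_cong[OF fun_cong[OF fun_cong[OF conjunct2[OF g], of v], of 0], of c]
    unfolding hcomp_def mmul_def zero_hom_def \<phi>_def by simp
  then have "vanishes_on_kernel (rdim (P i) v) (d i' v) \<phi>" by (rule vanishes_on_kernel_exact[OF ex])
  with is_homD(3)[OF di'] phiv have "in_row_space (rdim (P i') v) (d i' v) \<phi>"
    by (rule functional_in_row_space)
  then obtain \<psi> where psi: "\<psi> \<in> vspace (rdim (P i') v)" "\<And>j. (\<Sum>r<rdim (P i') v. \<psi> r * d i' v r j) = \<phi> j"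
    unfolding in_row_space_def by blast
  have Pr: "is_rep src tgt (P i')" using di' by (rule is_homD)
  define h where "h = inj_hom src tgt (P i') v \<psi>"
  have "is_hom src tgt (P (i - 1)) (inj_rep src tgt v) h" unfolding h_def using ii is_hom_inj_hom[OF Pr psi(1)] by simp
  moreover have "hcomp (P (i - 1)) h (d (i - 1)) = g"
    unfolding h_def using ii inj_hom_comp[OF di' psi(1)] psi(2) inj_hom_top_row[OF gh] unfolding \<phi>_def by simp
  ultimately show "\<exists>h. is_hom src tgt (P (i - 1)) (inj_rep src tgt v) h \<and> hcomp (P (i - 1)) h (d (i - 1)) = g" by blast
qed

section \<open>Projective resolutions of the injective at a vertex\<close>

text \<open>If some arrow ends at v, the top of I_v is \<Oplus>x. S_x ^ (in_mult v x), so its projective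
  cover is free_rep (in_mult v); the socle of I_v is reached through the radical.\<close>

definition in_slot :: "('a::finite \<Rightarrow> 'v) \<Rightarrow> ('a \<Rightarrow> 'v) \<Rightarrow> 'v \<Rightarrow> 'a \<Rightarrow> nat" where
  "in_slot src tgt v a = prefix_sum (in_block src tgt v (src a)) (arrow_idx a)"

lemma in_slot_lt: "tgt b = v \<Longrightarrow> in_slot src tgt v b < in_mult src tgt v (src b)"
  unfolding in_slot_def in_mult_def
  using prefix_sum_bound[OF arrow_idx_lt[of b], of 0 "in_block src tgt v (src b)"]
    in_block_arrow_idx[where tgt=tgt and b=b and v=v and src=src]
  by simp

definition inj_cover_top :: "('a::finite \<Rightarrow> 'v) \<Rightarrow> ('a \<Rightarrow> 'v) \<Rightarrow> 'v \<Rightarrow> ('v, 'k::field) hom" where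
  "inj_cover_top src tgt v = (\<lambda>x i j. if j < in_mult src tgt v x \<and> i = (if x = v then 1 else 0) + j then 1 else 0)"

definition inj_cover :: "('a::finite \<Rightarrow> 'v) \<Rightarrow> ('a \<Rightarrow> 'v) \<Rightarrow> 'v \<Rightarrow> ('v, 'k::field) hom" where
  "inj_cover src tgt v =
     free_ext src tgt (inj_rep src tgt v :: ('v, 'a, 'k) rep) (in_mult src tgt v) (inj_cover_top src tgt v)"

lemma is_hom_inj_cover:
  "is_hom src tgt (free_rep src tgt (in_mult src tgt v)) (inj_rep src tgt v :: ('v, 'a::finite, 'k::field) rep)
     (inj_cover src tgt v)"
  unfolding inj_cover_def
  by (rule is_hom_free_ext[OF is_rep_inj_rep]) (auto simp: mat_on_def inj_cover_top_def inj_dim_def)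

lemma inj_cover_top_cols:
  "q < in_mult src tgt v y \<Longrightarrow> (inj_cover src tgt v :: ('v, 'k::field) hom) y i q = inj_cover_top src tgt v y i q"
  unfolding inj_cover_def by (rule free_ext_top)

lemma inj_cover_rad:
  assumes "tgt a = y" "l < in_mult src tgt v (src a)"
  shows "(inj_cover src tgt v :: ('v, 'k::field) hom) y i (in_mult src tgt v y + rad_offset src tgt (in_mult src tgt v) a + l)
     = (if tgt a = v \<and> i = 0 \<and> l = in_slot src tgt v a then 1 else 0)"
proof -
  have "(inj_cover src tgt v :: ('v, 'k) hom) y i (in_mult src tgt v y + rad_offset src tgt (in_mult src tgt v) a + l)
     = mmul (inj_dim src tgt v (src a)) (inj_act src tgt v a) (inj_cover_top src tgt v (src a)) i l"
    unfolding inj_cover_def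
    using free_ext_rad[where src=src and tgt=tgt and m="in_mult src tgt v" and N="inj_rep src tgt v :: ('v, 'a, 'k) rep"
        and \<phi>="inj_cover_top src tgt v", OF assms] by simp
  also have "\<dots> = (if tgt a = v \<and> i = 0 then inj_cover_top src tgt v (src a) (inj_pos src tgt v a) l else 0)"
    by (rule mmul_inj_act)
  also have "\<dots> = (if tgt a = v \<and> i = 0 \<and> l = in_slot src tgt v a then 1 else 0)"
    unfolding inj_cover_top_def inj_pos_def in_slot_def using assms(2) by auto
  finally show ?thesis .
qed

text \<open>The column of the radical generator along an arrow b into v maps onto the socle.\<close>

definition socle_col :: "('a::finite \<Rightarrow> 'v) \<Rightarrow> ('a \<Rightarrow> 'v) \<Rightarrow> 'v \<Rightarrow> 'a \<Rightarrow> nat" where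
  "socle_col src tgt v b = in_mult src tgt v v + rad_offset src tgt (in_mult src tgt v) b + in_slot src tgt v b"

lemma socle_col_bound: "tgt b = v \<Longrightarrow> socle_col src tgt v b < free_dim src tgt (in_mult src tgt v) v"
  using rad_offset_bound[where src=src and tgt=tgt and m="in_mult src tgt v" and a=b, OF in_slot_lt]
  unfolding socle_col_def free_dim_def by simp

lemma inj_cover_socle_col:
  assumes "tgt b = v"
  shows "(inj_cover src tgt v :: ('v, 'k::field) hom) v i (socle_col src tgt v b) = (if i = 0 then 1 else 0)"
  unfolding socle_col_def
  using inj_cover_rad[where src=src and tgt=tgt and v=v and a=b and y=v and l="in_slot src tgt v b" and i=i,
      OF assms in_slot_lt[where src=src and tgt=tgt, OF assms]] assms
  by simp

lemma socle_col_inj: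
  assumes "tgt b1 = v" "tgt b2 = v" "b1 \<noteq> b2"
  shows "socle_col src tgt v b1 \<noteq> socle_col src tgt v b2"
proof
  assume "socle_col src tgt v b1 = socle_col src tgt v b2"
  then have "rad_offset src tgt (in_mult src tgt v) b1 + in_slot src tgt v b1 =
      rad_offset src tgt (in_mult src tgt v) b2 + in_slot src tgt v b2"
    unfolding socle_col_def by simp
  then show False
    using rad_offset_inj[where src=src and tgt=tgt and m="in_mult src tgt v" and a=b1 and a'=b2
        and l="in_slot src tgt v b1" and l'="in_slot src tgt v b2"]
      in_slot_lt[where src=src and tgt=tgt and b=b1] in_slot_lt[where src=src and tgt=tgt and b=b2] assms
    by simp
qed

lemma inj_cover_rad_zero:
  assumes "in_mult src tgt v y \<le> q" "\<not> (y = v \<and> i = 0)"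
  shows "(inj_cover src tgt v :: ('v, 'k::field) hom) y i q = 0"
proof (cases q rule: free_col_cases[where src=src and tgt=tgt and m="in_mult src tgt v" and y=y])
  case top then show ?thesis using assms(1) by simp
next
  case (rad a l)
  show ?thesis unfolding rad(3) inj_cover_rad[where src=src and tgt=tgt, OF rad(1,2)] using assms(2) rad(1) by auto
next
  case out then show ?thesis unfolding inj_cover_def by (simp add: free_ext_out)
qed

lemma inj_cover_kernel_top:
  assumes z: "mvec (free_dim src tgt (in_mult src tgt v) y) ((inj_cover src tgt v :: ('v, 'k::field) hom) y) x = (\<lambda>_. 0)"
    and q: "q < in_mult src tgt v y"
  shows "x q = 0"
proof -
  define i where "i = (if y = v then 1 else 0) + q"
  have "mvec (free_dim src tgt (in_mult src tgt v) y) ((inj_cover src tgt v :: ('v, 'k) hom) y) x i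
     = (\<Sum>q'<in_mult src tgt v y. inj_cover_top src tgt v y i q' * x q') +
       (\<Sum>q'<rad_mult src tgt (in_mult src tgt v) y.
          (inj_cover src tgt v :: ('v, 'k) hom) y i (in_mult src tgt v y + q') * x (in_mult src tgt v y + q'))"
    unfolding mvec_def free_dim_def sum_lessThan_add by (simp add: inj_cover_top_cols)
  also have "(\<Sum>q'<rad_mult src tgt (in_mult src tgt v) y.
      (inj_cover src tgt v :: ('v, 'k) hom) y i (in_mult src tgt v y + q') * x (in_mult src tgt v y + q')) = 0"
    by (intro sum.neutral ballI) (simp add: inj_cover_rad_zero i_def)
  also have "(\<Sum>q'<in_mult src tgt v y. inj_cover_top src tgt v y i q' * x q') = x q"
    unfolding inj_cover_top_def i_def using q by (simp add: if_distrib[of "\<lambda>x. x * _"] sum.delta cong: if_cong)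
  finally show ?thesis using z by simp
qed

lemma mvec_support: "(\<forall>q. c \<le> q \<longrightarrow> z q = 0) \<Longrightarrow> c \<le> n \<Longrightarrow> mvec n A z = mvec c A z"
proof -
  assume z: "\<forall>q. c \<le> q \<longrightarrow> z q = 0" and cn: "c \<le> n"
  obtain d where n: "n = c + d" using cn by (metis le_add_diff_inverse)
  show ?thesis unfolding mvec_def n sum_lessThan_add using z by simp
qed

lemma mvec_inj_cover_top:
  fixes z :: "'k::field vec"
  assumes z: "z \<in> vspace (in_mult src tgt v x)"
  defines "c \<equiv> if x = v then 1 else 0 :: nat"
  shows "mvec (free_dim src tgt (in_mult src tgt v) x) ((inj_cover src tgt v :: ('v, 'k) hom) x) z =
    (\<lambda>i. if c \<le> i \<and> i < c + in_mult src tgt v x then z (i - c) else 0)"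
proof (intro ext)
  fix i
  have "mvec (free_dim src tgt (in_mult src tgt v) x) ((inj_cover src tgt v :: ('v, 'k) hom) x) z i
      = mvec (in_mult src tgt v x) ((inj_cover src tgt v :: ('v, 'k) hom) x) z i"
    using mvec_support[of "in_mult src tgt v x" z "free_dim src tgt (in_mult src tgt v) x"] z
    unfolding vspace_def free_dim_def by simp
  also have "\<dots> = mvec (in_mult src tgt v x) (inj_cover_top src tgt v x) z i"
    unfolding mvec_def by (intro sum.cong) (simp_all add: inj_cover_top_cols)
  also have "\<dots> = (if c \<le> i \<and> i < c + in_mult src tgt v x then z (i - c) else 0)"
  proof (cases "c \<le> i \<and> i < c + in_mult src tgt v x")
    case True
    then have e: "\<And>j. (j < in_mult src tgt v x \<and> i = c + j) = (j = i - c)" by auto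
    have "i - c < in_mult src tgt v x" using True by linarith
    then show ?thesis unfolding mvec_def inj_cover_top_def c_def[symmetric] e using True
      by (simp add: if_distrib[of "\<lambda>x. x * _"] sum.delta cong: if_cong)
  next
    case False
    then show ?thesis unfolding mvec_def inj_cover_top_def c_def[symmetric] by (auto intro!: sum.neutral)
  qed
  finally show "mvec (free_dim src tgt (in_mult src tgt v) x) ((inj_cover src tgt v :: ('v, 'k) hom) x) z i =
    (if c \<le> i \<and> i < c + in_mult src tgt v x then z (i - c) else 0)" .
qed

lemma hom_surj_inj_cover:
  assumes b: "tgt b = v"
  shows "hom_surj (free_rep src tgt (in_mult src tgt v)) (inj_rep src tgt v :: ('v, 'a::finite, 'k::field) rep)
    (inj_cover src tgt v)"
  unfolding hom_surj_def
proof (intro allI ballI)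
  fix x and y :: "'k vec"
  assume y: "y \<in> vspace (rdim (inj_rep src tgt v :: ('v, 'a, 'k) rep) x)"
  define c where "c = (if x = v then 1 else 0 :: nat)"
  define pb where "pb = socle_col src tgt v b"
  define z1 where "z1 = (\<lambda>q. if q < in_mult src tgt v x then y (c + q) else 0)"
  define z2 where "z2 = (\<lambda>q. if x = v then y 0 * (if q = pb then 1 else 0) else 0)"
  have pbF: "pb < free_dim src tgt (in_mult src tgt v) v" unfolding pb_def using b by (rule socle_col_bound)
  have z1v: "z1 \<in> vspace (in_mult src tgt v x)" unfolding z1_def vspace_def by auto
  have m1: "mvec (free_dim src tgt (in_mult src tgt v) x) ((inj_cover src tgt v :: ('v, 'k) hom) x) z1 =
      (\<lambda>i. if c \<le> i \<and> i < c + in_mult src tgt v x then y i else 0)"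
    unfolding mvec_inj_cover_top[OF z1v] c_def[symmetric] by (auto simp: z1_def intro!: ext)
  have m2: "mvec (free_dim src tgt (in_mult src tgt v) x) ((inj_cover src tgt v :: ('v, 'k) hom) x) z2 =
      (\<lambda>i. if x = v \<and> i = 0 then y 0 else 0)"
  proof (cases "x = v")
    case True
    then show ?thesis unfolding z2_def
      using mvec_unit[OF pbF, of "(inj_cover src tgt v :: ('v, 'k) hom) v"] inj_cover_socle_col[where src=src and tgt=tgt and 'k='k, OF b]
      by (simp add: mvec_scale_vec pb_def fun_eq_iff)
  qed (simp add: z2_def mvec_zero_vec)
  define z where "z = (\<lambda>q. z1 q + z2 q)"
  have "z \<in> vspace (free_dim src tgt (in_mult src tgt v) x)"
    using pbF unfolding z_def z1_def z2_def vspace_def free_dim_def by auto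
  moreover have "mvec (free_dim src tgt (in_mult src tgt v) x) ((inj_cover src tgt v :: ('v, 'k) hom) x) z = y"
    unfolding z_def mvec_add_vec m1 m2
    using y unfolding vspace_def c_def rdim_inj_rep inj_dim_def by (auto intro!: ext split: if_splits)
  ultimately show "\<exists>z\<in>vspace (rdim (free_rep src tgt (in_mult src tgt v) :: ('v, 'a, 'k) rep) x).
      mvec (rdim (free_rep src tgt (in_mult src tgt v) :: ('v, 'a, 'k) rep) x) (inj_cover src tgt v x) z = y"
    by auto
qed

text \<open>Two arrows b1, b2 into v give the kernel vector e_(b1) - e_(b2) at v, so that S_v is a
  summand of the syzygy of I_v.\<close>

lemma inj_cover_kernel_diff:
  fixes src tgt :: "'a::finite \<Rightarrow> 'v"
  assumes b12: "b1 \<noteq> b2" "tgt b1 = v" "tgt b2 = v"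
  defines "x \<equiv> \<lambda>q. (if q = socle_col src tgt v b1 then 1 else 0) - (if q = socle_col src tgt v b2 then 1 else (0::'k::field))"
  shows "x \<in> vspace (free_dim src tgt (in_mult src tgt v) v)"
    "mvec (free_dim src tgt (in_mult src tgt v) v) ((inj_cover src tgt v :: ('v, 'k) hom) v) x = (\<lambda>_. 0)"
    "x (socle_col src tgt v b1) = 1"
proof -
  have p1: "socle_col src tgt v b1 < free_dim src tgt (in_mult src tgt v) v" using b12(2) by (rule socle_col_bound)
  have p2: "socle_col src tgt v b2 < free_dim src tgt (in_mult src tgt v) v" using b12(3) by (rule socle_col_bound)
  show "x \<in> vspace (free_dim src tgt (in_mult src tgt v) v)" using p1 p2 unfolding x_def vspace_def by auto
  show "mvec (free_dim src tgt (in_mult src tgt v) v) ((inj_cover src tgt v :: ('v, 'k) hom) v) x = (\<lambda>_. 0)"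
    unfolding x_def mvec_diff_vec mvec_unit[OF p1] mvec_unit[OF p2] inj_cover_socle_col[where src=src and tgt=tgt, OF b12(2)]
      inj_cover_socle_col[where src=src and tgt=tgt, OF b12(3)] by simp
  show "x (socle_col src tgt v b1) = 1" using socle_col_inj[OF b12(2,3,1)] unfolding x_def by simp
qed

lemma inj_cover_kernel_vector:
  fixes src tgt :: "'a::finite \<Rightarrow> 'v"
  assumes b12: "b1 \<noteq> b2" "tgt b1 = v" "tgt b2 = v"
    and ker: "\<forall>x. x \<in> vspace (free_dim src tgt (in_mult src tgt v) v) \<longrightarrow>
        mvec (free_dim src tgt (in_mult src tgt v) v) ((inj_cover src tgt v :: ('v, 'k::field) hom) v) x = (\<lambda>_. 0) \<longrightarrow>
        (\<exists>w\<in>vspace (k v). mvec (k v) (\<iota> v) w = x)"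
  shows "\<exists>w\<in>vspace (k v). mvec (k v) (\<iota> v) w (socle_col src tgt v b1) = 1"
proof -
  from ker inj_cover_kernel_diff(1,2)[where src=src and tgt=tgt, OF b12] obtain w where "w \<in> vspace (k v)"
    and w: "mvec (k v) (\<iota> v) w = (\<lambda>q. (if q = socle_col src tgt v b1 then 1 else 0) -
        (if q = socle_col src tgt v b2 then 1 else (0::'k)))"
    by blast
  moreover have "mvec (k v) (\<iota> v) w (socle_col src tgt v b1) = 1"
    using inj_cover_kernel_diff(3)[where src=src and tgt=tgt and 'k='k, OF b12] unfolding w by simp
  ultimately show ?thesis by blast
qed

lemma inj_rep_resolution:
  assumes b: "tgt b = v"
  shows "\<exists>k \<iota>. proj_resolution src tgt (inj_rep src tgt v :: ('v, 'a::finite, 'k::field) rep)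
      (rad_res_obj src tgt (in_mult src tgt v) k) (rad_res_diff src tgt \<iota> k) (inj_cover src tgt v) \<and>
    (\<forall>x. x \<in> vspace (free_dim src tgt (in_mult src tgt v) v) \<longrightarrow>
        mvec (free_dim src tgt (in_mult src tgt v) v) ((inj_cover src tgt v :: ('v, 'k) hom) v) x = (\<lambda>_. 0) \<longrightarrow>
        (\<exists>w\<in>vspace (k v). mvec (k v) (\<iota> v) w = x))"
proof -
  obtain k \<iota> where B: "\<And>y. basis_mat (free_dim src tgt (in_mult src tgt v) y) (k y) (\<iota> y)
      {x \<in> vspace (free_dim src tgt (in_mult src tgt v) y).
        mvec (free_dim src tgt (in_mult src tgt v) y) ((inj_cover src tgt v :: ('v, 'k) hom) y) x = (\<lambda>_. 0)}"
    using kernel_basis[where E="inj_cover src tgt v :: ('v, 'k) hom" and N="free_dim src tgt (in_mult src tgt v)"]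
    by blast
  have mo: "mat_on (free_dim src tgt (in_mult src tgt v) y) (k y) (\<iota> y)"
    and inj: "\<And>w. w \<in> vspace (k y) \<Longrightarrow> mvec (k y) (\<iota> y) w = (\<lambda>_. 0) \<Longrightarrow> w = (\<lambda>_. 0)"
    and ker: "\<And>x. (x \<in> vspace (free_dim src tgt (in_mult src tgt v) y) \<and>
        mvec (free_dim src tgt (in_mult src tgt v) y) ((inj_cover src tgt v :: ('v, 'k) hom) y) x = (\<lambda>_. 0)) \<longleftrightarrow>
        (\<exists>w\<in>vspace (k y). mvec (k y) (\<iota> y) w = x)" for y
    using B[of y] unfolding basis_mat_def by blast+
  have rad: "\<iota> y i j = 0" if i: "i < in_mult src tgt v y" for y i j
  proof (cases "j < k y")
    case True
    have "(\<lambda>i. if i = j then 1 else 0) \<in> vspace (k y)" unfolding vspace_def using True by auto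
    then have "mvec (free_dim src tgt (in_mult src tgt v) y) ((inj_cover src tgt v :: ('v, 'k) hom) y) (\<lambda>i. \<iota> y i j) = (\<lambda>_. 0)"
      using ker[of "\<lambda>i. \<iota> y i j" y] mvec_unit[OF True, of "\<iota> y"] by blast
    then show ?thesis using inj_cover_kernel_top[OF _ i] by blast
  next
    case False then show ?thesis using mat_onD[OF mo[of y]] by simp
  qed
  have "proj_resolution src tgt (inj_rep src tgt v :: ('v, 'a, 'k) rep)
      (rad_res_obj src tgt (in_mult src tgt v) k) (rad_res_diff src tgt \<iota> k) (inj_cover src tgt v)"
  proof (rule proj_resolution_radical[OF is_hom_inj_cover hom_surj_inj_cover[where src=src and tgt=tgt, OF b] mo rad inj])
    fix y and x :: "'k vec" assume "x \<in> vspace (free_dim src tgt (in_mult src tgt v) y)"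
    then show "(mvec (free_dim src tgt (in_mult src tgt v) y) (inj_cover src tgt v y) x = (\<lambda>_. 0)) =
        (\<exists>w\<in>vspace (k y). mvec (k y) (\<iota> y) w = x)"
      using ker[of x y] by blast
  qed
  moreover have "\<exists>w\<in>vspace (k v). mvec (k v) (\<iota> v) w = x"
    if "x \<in> vspace (free_dim src tgt (in_mult src tgt v) v)"
      "mvec (free_dim src tgt (in_mult src tgt v) v) ((inj_cover src tgt v :: ('v, 'k) hom) v) x = (\<lambda>_. 0)" for x
    using ker that by blast
  ultimately show ?thesis by (intro exI[of _ k] exI[of _ \<iota>] conjI allI impI) blast+
qed

text \<open>Without arrows into v, I_v is the simple S_v, covered by the top of P_v.\<close>

definition vertex_ind :: "'v \<Rightarrow> 'v \<Rightarrow> nat" where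
  "vertex_ind v = (\<lambda>x. if x = v then 1 else 0)"

definition simple_inj_cover :: "'v \<Rightarrow> ('v, 'k::field) hom" where
  "simple_inj_cover v = top_hom (\<lambda>x i j. if x = v \<and> i = 0 \<and> j = 0 then 1 else 0) (vertex_ind v)"

lemma in_mult_no_in_arrows: "(\<And>a. tgt a \<noteq> v) \<Longrightarrow> in_mult src tgt v x = 0"
  unfolding in_mult_def prefix_sum_def in_block_def by simp

lemma mvec_simple_inj_cover:
  "mvec n ((simple_inj_cover v :: ('v, 'k::field) hom) y) x = (\<lambda>i. if y = v \<and> i = 0 \<and> 0 < n then x 0 else 0)"
  unfolding mvec_def simple_inj_cover_def top_hom_def vertex_ind_def
  by (auto intro!: ext simp: if_distrib[of "\<lambda>x. x * _"] sum.delta cong: if_cong)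

lemma simple_inj_rep_resolution:
  assumes noin: "\<And>a. tgt a \<noteq> v"
  shows "proj_resolution src tgt (inj_rep src tgt v :: ('v, 'a::finite, 'k::field) rep)
      (rad_res_obj src tgt (vertex_ind v) (rad_mult src tgt (vertex_ind v)))
      (rad_res_diff src tgt (rad_incl src tgt (vertex_ind v)) (rad_mult src tgt (vertex_ind v))) (simple_inj_cover v)"
proof (rule proj_resolution_radical)
  have Id: "inj_dim src tgt v x = vertex_ind v x" for x
    unfolding inj_dim_def vertex_ind_def using in_mult_no_in_arrows[OF noin] by simp
  have Fpos: "0 < free_dim src tgt (vertex_ind v) v" unfolding free_dim_def vertex_ind_def by simp
  show "is_hom src tgt (free_rep src tgt (vertex_ind v)) (inj_rep src tgt v :: ('v, 'a, 'k) rep) (simple_inj_cover v)"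
    unfolding simple_inj_cover_def
  proof (rule is_hom_top_hom[OF is_rep_inj_rep])
    show "\<And>y. mat_on (rdim (inj_rep src tgt v :: ('v, 'a, 'k) rep) y) (vertex_ind v y)
        (\<lambda>i j. if y = v \<and> i = 0 \<and> j = 0 then 1 else 0)"
      by (auto simp: mat_on_def Id vertex_ind_def)
    show "\<And>a i l. mmul (rdim (inj_rep src tgt v :: ('v, 'a, 'k) rep) (src a)) (ract (inj_rep src tgt v :: ('v, 'a, 'k) rep) a)
        (\<lambda>i j. if src a = v \<and> i = 0 \<and> j = 0 then 1 else 0) i l = 0"
      unfolding rdim_inj_rep ract_inj_rep mmul_inj_act using noin by simp
  qed
  show "hom_surj (free_rep src tgt (vertex_ind v)) (inj_rep src tgt v :: ('v, 'a, 'k) rep) (simple_inj_cover v)"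
    unfolding hom_surj_def
  proof (intro allI ballI)
    fix x and y :: "'k vec" assume "y \<in> vspace (rdim (inj_rep src tgt v :: ('v, 'a, 'k) rep) x)"
    then have y: "y \<in> vspace (vertex_ind v x)" using Id by simp
    then have "y \<in> vspace (free_dim src tgt (vertex_ind v) x)" unfolding vspace_def free_dim_def by auto
    moreover have "mvec (free_dim src tgt (vertex_ind v) x) ((simple_inj_cover v :: ('v, 'k) hom) x) y = y"
      using y Fpos unfolding mvec_simple_inj_cover vspace_def vertex_ind_def
      by (cases "x = v") (auto intro!: ext)
    ultimately show "\<exists>z\<in>vspace (rdim (free_rep src tgt (vertex_ind v) :: ('v, 'a, 'k) rep) x).
        mvec (rdim (free_rep src tgt (vertex_ind v) :: ('v, 'a, 'k) rep) x) (simple_inj_cover v x) z = y" by auto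
  qed
  show "\<And>y. mat_on (free_dim src tgt (vertex_ind v) y) (rad_mult src tgt (vertex_ind v) y) (rad_incl src tgt (vertex_ind v) y)"
    by (rule mat_on_rad_incl)
  show "\<And>y i j. i < vertex_ind v y \<Longrightarrow> rad_incl src tgt (vertex_ind v) y i j = 0" unfolding rad_incl_def by auto
  show "\<And>y w. w \<in> vspace (rad_mult src tgt (vertex_ind v) y) \<Longrightarrow>
      mvec (rad_mult src tgt (vertex_ind v) y) (rad_incl src tgt (vertex_ind v) y) w = (\<lambda>_. 0) \<Longrightarrow> w = (\<lambda>_. 0)"
    by (rule rad_incl_inj)
  fix y and x :: "'k vec" assume x: "x \<in> vspace (free_dim src tgt (vertex_ind v) y)"
  have "(mvec (free_dim src tgt (vertex_ind v) y) ((simple_inj_cover v :: ('v, 'k) hom) y) x = (\<lambda>_. 0)) \<longleftrightarrow>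
      (\<forall>i<vertex_ind v y. x i = 0)"
    using Fpos unfolding mvec_simple_inj_cover vertex_ind_def by (auto simp: fun_eq_iff)
  then show "(mvec (free_dim src tgt (vertex_ind v) y) (simple_inj_cover v y) x = (\<lambda>_. 0)) =
      (\<exists>w\<in>vspace (rad_mult src tgt (vertex_ind v) y).
        mvec (rad_mult src tgt (vertex_ind v) y) (rad_incl src tgt (vertex_ind v) y) w = x)"
    using image_rad_incl[OF x] by simp
qed

section \<open>Non-vanishing Ext into the projective at a vertex\<close>

lemma not_Ext_zeroI:
  assumes "proj_resolution src tgt X P d e" "is_hom src tgt (P i) Y g" "hcomp (P i) g (d i) = zero_hom"
    "\<not> (\<exists>h. is_hom src tgt (P (i - 1)) Y h \<and> hcomp (P (i - 1)) h (d (i - 1)) = g)"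
  shows "\<not> Ext_zero src tgt i X Y"
  using assms unfolding Ext_zero_def by blast

lemma mmul_free_act_vertex_ind:
  assumes "src a = v"
  shows "mmul (free_dim src tgt (vertex_ind v) (src a)) (free_act src tgt (vertex_ind v) a) B i 0 =
    (if i = vertex_ind v (tgt a) + rad_offset src tgt (vertex_ind v) a then B 0 0 else 0)"
proof -
  have pos: "free_dim src tgt (vertex_ind v) (src a) > 0" using assms unfolding free_dim_def vertex_ind_def by simp
  have "\<And>j. free_act src tgt (vertex_ind v) a i j * B j 0 =
     (if j = 0 then (if i = vertex_ind v (tgt a) + rad_offset src tgt (vertex_ind v) a then B 0 0 else 0) else 0)"
    using assms unfolding free_act_def vertex_ind_def by auto
  then show ?thesis unfolding mmul_def using pos by (simp add: sum.delta)
qed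

definition out_col :: "('a::finite \<Rightarrow> 'v) \<Rightarrow> ('a \<Rightarrow> 'v) \<Rightarrow> ('v \<Rightarrow> nat) \<Rightarrow> 'a \<Rightarrow> nat" where
  "out_col src tgt m a = m (tgt a) + rad_offset src tgt m a"

lemma out_col_bound: "0 < m (src a) \<Longrightarrow> out_col src tgt m a < free_dim src tgt m (tgt a)"
  using rad_offset_bound[where src=src and tgt=tgt and m=m and a=a and j=0]
  unfolding out_col_def free_dim_def by simp

lemma hom_to_vertex_proj_out_arrow:
  fixes h :: "('v, 'k::field) hom" and tgt :: "'a::finite \<Rightarrow> 'v"
  assumes h: "is_hom src tgt (free_rep src tgt m) (free_rep src tgt (vertex_ind v) :: ('v, 'a, 'k) rep) h"
    and sa: "src a = v" and mv: "0 < m v"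
  shows "h (tgt a) i (out_col src tgt m a) = (if i = out_col src tgt (vertex_ind v) a then h v 0 0 else 0)"
proof -
  have "h (tgt a) i (out_col src tgt m a) = mmul (free_dim src tgt m (tgt a)) (h (tgt a)) (free_act src tgt m a) i 0"
    unfolding mmul_free_act out_col_def using mv sa by simp
  also have "\<dots> = mmul (free_dim src tgt (vertex_ind v) (src a)) (free_act src tgt (vertex_ind v) a) (h (src a)) i 0"
    using is_homD(4)[OF h, of a] by simp
  also have "\<dots> = (if i = out_col src tgt (vertex_ind v) a then h v 0 0 else 0)"
    unfolding mmul_free_act_vertex_ind[where src=src and tgt=tgt, OF sa] out_col_def using sa by simp
  finally show ?thesis .
qed

text \<open>The cocycle on rad (free_rep m), whose top is free_rep (rad_mult m), sending the radical
  generator along a1 to the radical element of P_v along a1 and everything else to zero.\<close>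

definition arrow_cocycle :: "('a::finite \<Rightarrow> 'v) \<Rightarrow> ('a \<Rightarrow> 'v) \<Rightarrow> ('v \<Rightarrow> nat) \<Rightarrow> 'v \<Rightarrow> 'a \<Rightarrow> ('v, 'k::field) hom" where
  "arrow_cocycle src tgt m v a1 = top_hom
     (\<lambda>y i j. if y = tgt a1 \<and> i = out_col src tgt (vertex_ind v) a1 \<and> j < rad_mult src tgt m y
       then rad_incl src tgt m y (out_col src tgt m a1) j else 0) (rad_mult src tgt m)"

lemma is_hom_arrow_cocycle:
  fixes tgt :: "'a::finite \<Rightarrow> 'v"
  assumes "src a1 = v"
  shows "is_hom src tgt (free_rep src tgt (rad_mult src tgt m)) (free_rep src tgt (vertex_ind v) :: ('v, 'a, 'k::field) rep)
    (arrow_cocycle src tgt m v a1)"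
  unfolding arrow_cocycle_def
proof (rule is_hom_top_hom_rad)
  show "\<And>y. mat_on (free_dim src tgt (vertex_ind v) y) (rad_mult src tgt m y)
      (\<lambda>i j. if y = tgt a1 \<and> i = out_col src tgt (vertex_ind v) a1 \<and> j < rad_mult src tgt m y
        then rad_incl src tgt m y (out_col src tgt m a1) j else (0::'k))"
    using out_col_bound[where src=src and tgt=tgt and m="vertex_ind v" and a=a1] assms
    unfolding mat_on_def vertex_ind_def by auto
  show "\<And>y i j. i < vertex_ind v y \<Longrightarrow> (if y = tgt a1 \<and> i = out_col src tgt (vertex_ind v) a1 \<and> j < rad_mult src tgt m y
      then rad_incl src tgt m y (out_col src tgt m a1) j else (0::'k)) = 0"
    unfolding out_col_def by auto
qed

text \<open>Every map free_rep m \<rightarrow> P_v treats the arrows a1 and a2 out of v alike, while the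
  cocycle does not.\<close>

lemma arrow_cocycle_not_coboundary:
  fixes tgt :: "'a::finite \<Rightarrow> 'v"
  assumes a12: "a1 \<noteq> a2" "src a1 = v" "src a2 = v" and mv: "0 < m v"
    and hh: "is_hom src tgt (free_rep src tgt m) (free_rep src tgt (vertex_ind v) :: ('v, 'a, 'k::field) rep) h"
  shows "hcomp (free_rep src tgt m) h (rad_cover src tgt m) \<noteq> arrow_cocycle src tgt m v a1"
proof
  define k where "k = rad_mult src tgt m"
  define \<iota> where "\<iota> = (rad_incl src tgt m :: ('v, 'k) hom)"
  define row where "row = out_col src tgt (vertex_ind v)"
  define col where "col = out_col src tgt m"
  assume "hcomp (free_rep src tgt m) h (rad_cover src tgt m) = arrow_cocycle src tgt m v a1"
  then have hg: "hcomp (free_rep src tgt m) h (top_hom \<iota> k) = arrow_cocycle src tgt m v a1"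
    unfolding rad_cover_def k_def \<iota>_def .
  have key: "(if i = row a then h v 0 0 else 0) =
      (if tgt a = tgt a1 \<and> i = row a1 then (if col a1 = col a then 1 else 0) else 0)"
    if sa: "src a = v" for a i
  proof -
    have colb: "col a < free_dim src tgt m (tgt a)" unfolding col_def using mv sa by (intro out_col_bound) simp
    define u where "u = (\<lambda>j. if j = col a then 1 else (0::'k))"
    have uv: "u \<in> vspace (free_dim src tgt m (tgt a))" using colb unfolding u_def vspace_def by auto
    have "\<forall>i<m (tgt a). u i = 0" unfolding u_def col_def out_col_def by auto
    then obtain w where w: "w \<in> vspace (k (tgt a))" "mvec (k (tgt a)) (\<iota> (tgt a)) w = u"
      using image_rad_incl[OF uv] unfolding k_def \<iota>_def by blast
    have "mvec (free_dim src tgt k (tgt a)) (arrow_cocycle src tgt m v a1 (tgt a)) w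
        = mvec (free_dim src tgt m (tgt a)) (h (tgt a)) (mvec (free_dim src tgt k (tgt a)) (top_hom \<iota> k (tgt a)) w)"
      unfolding hg[symmetric] using mvec_hcomp[of "free_rep src tgt k" "tgt a" "free_rep src tgt m" h] by simp
    also have "mvec (free_dim src tgt k (tgt a)) (top_hom \<iota> k (tgt a)) w = u"
      using w(2) by (simp add: mvec_top_hom free_dim_def)
    also have "mvec (free_dim src tgt m (tgt a)) (h (tgt a)) u = (\<lambda>i. h (tgt a) i (col a))"
      unfolding u_def by (rule mvec_unit[OF colb])
    finally have "mvec (free_dim src tgt k (tgt a)) (arrow_cocycle src tgt m v a1 (tgt a)) w i = (if i = row a then h v 0 0 else 0)"
      using hom_to_vertex_proj_out_arrow[OF hh sa mv] unfolding col_def row_def by simp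
    moreover have "mvec (free_dim src tgt k (tgt a)) (arrow_cocycle src tgt m v a1 (tgt a)) w i =
        (if tgt a = tgt a1 \<and> i = row a1 then u (col a1) else 0)"
      unfolding arrow_cocycle_def k_def[symmetric] \<iota>_def[symmetric] w(2)[symmetric] row_def[symmetric] col_def[symmetric]
      by (simp add: mvec_top_hom free_dim_def) (auto simp: mvec_def intro!: sum.cong)
    ultimately show ?thesis unfolding u_def by metis
  qed
  have col_ne: "col a1 \<noteq> col a2" if "tgt a1 = tgt a2"
    using rad_offset_inj[where src=src and tgt=tgt and m=m and a=a1 and a'=a2 and l=0 and l'=0] that a12 mv
    unfolding col_def out_col_def by auto
  have "h v 0 0 = 1" using key[OF a12(2), of "row a1"] by simp
  moreover have "h v 0 0 = 0" using key[OF a12(3), of "row a2"] col_ne by (auto split: if_splits)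
  ultimately show False by simp
qed

text \<open>Ext^1(rad (free_rep m), P_v) \<noteq> 0 when S_v is a summand of the top of free_rep m and two
  arrows leave v.\<close>

lemma noncoboundary_two_out_arrows:
  fixes tgt :: "'a::finite \<Rightarrow> 'v"
  assumes a12: "a1 \<noteq> a2" "src a1 = v" "src a2 = v" and mv: "0 < m v"
  shows "\<exists>g. is_hom src tgt (free_rep src tgt (rad_mult src tgt m)) (free_rep src tgt (vertex_ind v) :: ('v, 'a, 'k::field) rep) g \<and>
     hcomp (free_rep src tgt (rad_mult src tgt m)) g (rad_cover src tgt (rad_mult src tgt m)) = zero_hom \<and>
     \<not> (\<exists>h. is_hom src tgt (free_rep src tgt m) (free_rep src tgt (vertex_ind v) :: ('v, 'a, 'k) rep) h \<and>
            hcomp (free_rep src tgt m) h (rad_cover src tgt m) = g)"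
proof (intro exI[of _ "arrow_cocycle src tgt m v a1"] conjI)
  show "is_hom src tgt (free_rep src tgt (rad_mult src tgt m)) (free_rep src tgt (vertex_ind v) :: ('v, 'a, 'k) rep)
      (arrow_cocycle src tgt m v a1)"
    using a12(2) by (rule is_hom_arrow_cocycle)
  show "hcomp (free_rep src tgt (rad_mult src tgt m)) (arrow_cocycle src tgt m v a1)
      (rad_cover src tgt (rad_mult src tgt m)) = zero_hom"
    unfolding arrow_cocycle_def by (rule top_hom_rad_cover_zero)
  show "\<not> (\<exists>h. is_hom src tgt (free_rep src tgt m) (free_rep src tgt (vertex_ind v) :: ('v, 'a, 'k) rep) h \<and>
      hcomp (free_rep src tgt m) h (rad_cover src tgt m) = arrow_cocycle src tgt m v a1)"
    using arrow_cocycle_not_coboundary[where src=src and tgt=tgt and m=m and 'k='k, OF a12 mv] by blast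
qed

text \<open>The top of free_rep \<mu> has nothing at a sink v, and its radical is killed on the way
  to S_v.\<close>

lemma hom_free_to_sink_zero:
  fixes h :: "('v, 'k::field) hom" and tgt :: "'a::finite \<Rightarrow> 'v"
  assumes sink: "\<And>a. src a \<noteq> v" and mu0: "\<mu> v = 0"
    and hh: "is_hom src tgt (free_rep src tgt \<mu>) (free_rep src tgt (vertex_ind v) :: ('v, 'a, 'k) rep) h"
  shows "h v 0 q = 0"
proof (cases q rule: free_col_cases[where src=src and tgt=tgt and m=\<mu> and y=v])
  case top then show ?thesis using mu0 by simp
next
  case (rad a l)
  have "h v 0 q = mmul (free_dim src tgt \<mu> (tgt a)) (h (tgt a)) (free_act src tgt \<mu> a) 0 l"
    unfolding mmul_free_act using rad by simp
  also have "\<dots> = mmul (free_dim src tgt (vertex_ind v) (src a)) (free_act src tgt (vertex_ind v) a) (h (src a)) 0 l"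
    using is_homD(4)[OF hh, of a] by simp
  also have "\<dots> = 0"
    unfolding mmul_def free_act_def using sink[of a] by (auto intro!: sum.neutral simp: vertex_ind_def)
  finally show ?thesis .
next
  case out
  then show ?thesis using mat_onD[OF is_homD(3)[OF hh, of v], of 0 q] by simp
qed

text \<open>If v is a sink, then P_v = S_v, and a syzygy containing S_v in degree 1 of a module whose
  projective cover has no summand P_v gives Ext^1(X, S_v) \<noteq> 0.\<close>

lemma noncoboundary_sink:
  fixes \<iota> :: "('v, 'k::field) hom" and tgt :: "'a::finite \<Rightarrow> 'v"
  assumes sink: "\<And>a. src a \<noteq> v" and mu0: "\<mu> v = 0"
    and kap: "w \<in> vspace (k v)" "mvec (k v) (\<iota> v) w p = 1"
  shows "\<exists>g. is_hom src tgt (free_rep src tgt k) (free_rep src tgt (vertex_ind v) :: ('v, 'a, 'k) rep) g \<and>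
     hcomp (free_rep src tgt k) g (rad_cover src tgt k) = zero_hom \<and>
     \<not> (\<exists>h. is_hom src tgt (free_rep src tgt \<mu>) (free_rep src tgt (vertex_ind v) :: ('v, 'a, 'k) rep) h \<and>
            hcomp (free_rep src tgt \<mu>) h (top_hom \<iota> k) = g)"
proof -
  define \<psi> where "\<psi> = (\<lambda>y (i::nat) j. if y = v \<and> i = 0 \<and> j < k y then \<iota> y p j else 0)"
  define g where "g = top_hom \<psi> k"
  have "is_hom src tgt (free_rep src tgt k) (free_rep src tgt (vertex_ind v) :: ('v, 'a, 'k) rep) g"
    unfolding g_def
  proof (rule is_hom_top_hom[OF is_rep_free_rep])
    fix y show "mat_on (rdim (free_rep src tgt (vertex_ind v) :: ('v, 'a, 'k) rep) y) (k y) (\<psi> y)"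
      unfolding mat_on_def \<psi>_def by (auto simp: free_dim_def vertex_ind_def)
  next
    fix a :: 'a and i l
    show "mmul (rdim (free_rep src tgt (vertex_ind v) :: ('v, 'a, 'k) rep) (src a))
        (ract (free_rep src tgt (vertex_ind v) :: ('v, 'a, 'k) rep) a) (\<psi> (src a)) i l = 0"
      unfolding mmul_def ract_free_rep free_act_def using sink[of a] by (auto intro!: sum.neutral simp: vertex_ind_def)
  qed
  moreover have "hcomp (free_rep src tgt k) g (rad_cover src tgt k) = zero_hom"
    unfolding g_def by (rule top_hom_rad_cover_zero)
  moreover have "\<not> (\<exists>h. is_hom src tgt (free_rep src tgt \<mu>) (free_rep src tgt (vertex_ind v) :: ('v, 'a, 'k) rep) h \<and>
            hcomp (free_rep src tgt \<mu>) h (top_hom \<iota> k) = g)"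
  proof
    assume "\<exists>h. is_hom src tgt (free_rep src tgt \<mu>) (free_rep src tgt (vertex_ind v) :: ('v, 'a, 'k) rep) h \<and>
            hcomp (free_rep src tgt \<mu>) h (top_hom \<iota> k) = g"
    then obtain h where hh: "is_hom src tgt (free_rep src tgt \<mu>) (free_rep src tgt (vertex_ind v) :: ('v, 'a, 'k) rep) h"
      and hg: "hcomp (free_rep src tgt \<mu>) h (top_hom \<iota> k) = g" by blast
    have h0: "h v 0 q = 0" for q using hom_free_to_sink_zero[OF sink mu0 hh] .
    obtain j where j: "j < k v" "\<iota> v p j \<noteq> 0"
      using kap(2) unfolding mvec_def by (metis (no_types, lifting) mult_zero_left sum.neutral zero_neq_one lessThan_iff)
    have "g v 0 j = \<iota> v p j" unfolding g_def top_hom_def \<psi>_def using j(1) by simp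
    moreover have "hcomp (free_rep src tgt \<mu>) h (top_hom \<iota> k) v 0 j = 0" unfolding hcomp_def mmul_def h0 by simp
    ultimately show False using hg j(2) by simp
  qed
  ultimately show ?thesis by blast
qed

section \<open>Degrees of vertices under cluster tilting\<close>

text \<open>P_v is projective and I_v injective, so both lie in every n-cluster tilting subcategory.\<close>

lemma Ext_zero_inj_free_cluster_tilting:
  fixes C :: "('v, 'a::finite, 'k::field) rep set"
  assumes C: "n_cluster_tilting src tgt n C" and i: "0 < i" "i < n"
  shows "Ext_zero src tgt i (inj_rep src tgt v) (free_rep src tgt m :: ('v, 'a::finite, 'k::field) rep)"
proof -
  have C1: "C = {X. is_rep src tgt X \<and> (\<forall>i. 0 < i \<and> i < n \<longrightarrow> (\<forall>Y\<in>C. Ext_zero src tgt i X Y))}"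
    and C2: "C = {X. is_rep src tgt X \<and> (\<forall>i. 0 < i \<and> i < n \<longrightarrow> (\<forall>Y\<in>C. Ext_zero src tgt i Y X))}"
    using C unfolding n_cluster_tilting_def by auto
  have "free_rep src tgt m \<in> {X. is_rep src tgt X \<and> (\<forall>i. 0 < i \<and> i < n \<longrightarrow> (\<forall>Y\<in>C. Ext_zero src tgt i X Y))}"
    by (auto intro: is_rep_free_rep Ext_zero_projective projective_free_rep)
  then have P: "(free_rep src tgt m :: ('v, 'a, 'k) rep) \<in> C"
    by (rule subst[where P="\<lambda>S. (free_rep src tgt m :: ('v, 'a, 'k) rep) \<in> S", OF C1[symmetric]])
  have "inj_rep src tgt v \<in> {X. is_rep src tgt X \<and> (\<forall>i. 0 < i \<and> i < n \<longrightarrow> (\<forall>Y\<in>C. Ext_zero src tgt i Y X))}"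
    by (auto intro: is_rep_inj_rep Ext_zero_inj_rep)
  then have "(inj_rep src tgt v :: ('v, 'a, 'k) rep) \<in> C"
    by (rule subst[where P="\<lambda>S. (inj_rep src tgt v :: ('v, 'a, 'k) rep) \<in> S", OF C2[symmetric]])
  then have "inj_rep src tgt v \<in> {X. is_rep src tgt X \<and> (\<forall>i. 0 < i \<and> i < n \<longrightarrow> (\<forall>Y\<in>C. Ext_zero src tgt i X Y))}"
    by (rule subst[where P="\<lambda>S. (inj_rep src tgt v :: ('v, 'a, 'k) rep) \<in> S", OF C1])
  then show ?thesis using P i by blast
qed

lemma not_Ext1_source_two_out:
  fixes tgt :: "'a::finite \<Rightarrow> 'v"
  assumes noin: "\<And>a. tgt a \<noteq> v" and a12: "a1 \<noteq> a2" "src a1 = v" "src a2 = v"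
  shows "\<not> Ext_zero src tgt 1 (inj_rep src tgt v) (free_rep src tgt (vertex_ind v) :: ('v, 'a, 'k::field) rep)"
proof -
  obtain g where g: "is_hom src tgt (free_rep src tgt (rad_mult src tgt (vertex_ind v)))
        (free_rep src tgt (vertex_ind v) :: ('v, 'a, 'k) rep) g"
      "hcomp (free_rep src tgt (rad_mult src tgt (vertex_ind v))) g
        (rad_cover src tgt (rad_mult src tgt (vertex_ind v))) = zero_hom"
      "\<not> (\<exists>h. is_hom src tgt (free_rep src tgt (vertex_ind v)) (free_rep src tgt (vertex_ind v) :: ('v, 'a, 'k) rep) h \<and>
        hcomp (free_rep src tgt (vertex_ind v)) h (rad_cover src tgt (vertex_ind v)) = g)"
    using noncoboundary_two_out_arrows[OF a12, of "vertex_ind v"] by (auto simp: vertex_ind_def)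
  show ?thesis
    by (rule not_Ext_zeroI[OF simple_inj_rep_resolution[OF noin]]) (use g in \<open>simp_all add: rad_cover_def\<close>)
qed

lemma not_Ext1_sink_two_in:
  fixes tgt :: "'a::finite \<Rightarrow> 'v"
  assumes noout: "\<And>a. src a \<noteq> v" and b12: "b1 \<noteq> b2" "tgt b1 = v" "tgt b2 = v"
  shows "\<not> Ext_zero src tgt 1 (inj_rep src tgt v) (free_rep src tgt (vertex_ind v) :: ('v, 'a, 'k::field) rep)"
proof -
  obtain k \<iota> where R: "proj_resolution src tgt (inj_rep src tgt v :: ('v, 'a, 'k) rep)
      (rad_res_obj src tgt (in_mult src tgt v) k) (rad_res_diff src tgt \<iota> k) (inj_cover src tgt v)"
    and ker: "\<forall>x. x \<in> vspace (free_dim src tgt (in_mult src tgt v) v) \<longrightarrow>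
        mvec (free_dim src tgt (in_mult src tgt v) v) ((inj_cover src tgt v :: ('v, 'k) hom) v) x = (\<lambda>_. 0) \<longrightarrow>
        (\<exists>w\<in>vspace (k v). mvec (k v) (\<iota> v) w = x)"
    using inj_rep_resolution[where src=src and tgt=tgt and 'k='k, OF b12(2)] by blast
  obtain w where w: "w \<in> vspace (k v)" "mvec (k v) (\<iota> v) w (socle_col src tgt v b1) = 1"
    using inj_cover_kernel_vector[where src=src and tgt=tgt and k=k and \<iota>=\<iota>, OF b12 ker] by blast
  have "in_mult src tgt v v = 0" using noout unfolding in_mult_def prefix_sum_def in_block_def by simp
  from noncoboundary_sink[where src=src and tgt=tgt and k=k and \<iota>=\<iota> and v=v and \<mu>="in_mult src tgt v", OF noout this w] obtain g
    where "is_hom src tgt (free_rep src tgt k) (free_rep src tgt (vertex_ind v) :: ('v, 'a, 'k) rep) g"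
      "hcomp (free_rep src tgt k) g (rad_cover src tgt k) = zero_hom"
      "\<not> (\<exists>h. is_hom src tgt (free_rep src tgt (in_mult src tgt v)) (free_rep src tgt (vertex_ind v) :: ('v, 'a, 'k) rep) h \<and>
        hcomp (free_rep src tgt (in_mult src tgt v)) h (top_hom \<iota> k) = g)"
    by blast
  then show ?thesis by (intro not_Ext_zeroI[OF R]) simp_all
qed

lemma not_Ext2_two_in_two_out:
  fixes tgt :: "'a::finite \<Rightarrow> 'v"
  assumes a12: "a1 \<noteq> a2" "src a1 = v" "src a2 = v" and b12: "b1 \<noteq> b2" "tgt b1 = v" "tgt b2 = v"
  shows "\<not> Ext_zero src tgt 2 (inj_rep src tgt v) (free_rep src tgt (vertex_ind v) :: ('v, 'a, 'k::field) rep)"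
proof -
  obtain k \<iota> where R: "proj_resolution src tgt (inj_rep src tgt v :: ('v, 'a, 'k) rep)
      (rad_res_obj src tgt (in_mult src tgt v) k) (rad_res_diff src tgt \<iota> k) (inj_cover src tgt v)"
    and ker: "\<forall>x. x \<in> vspace (free_dim src tgt (in_mult src tgt v) v) \<longrightarrow>
        mvec (free_dim src tgt (in_mult src tgt v) v) ((inj_cover src tgt v :: ('v, 'k) hom) v) x = (\<lambda>_. 0) \<longrightarrow>
        (\<exists>w\<in>vspace (k v). mvec (k v) (\<iota> v) w = x)"
    using inj_rep_resolution[where src=src and tgt=tgt and 'k='k, OF b12(2)] by blast
  obtain w where "mvec (k v) (\<iota> v) w (socle_col src tgt v b1) = 1"
    using inj_cover_kernel_vector[where src=src and tgt=tgt and k=k and \<iota>=\<iota>, OF b12 ker] by blast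
  then have "0 < k v" by (rule contrapos_pp) (simp add: mvec_def)
  from noncoboundary_two_out_arrows[where src=src and tgt=tgt and m=k, OF a12 this] obtain g
    where "is_hom src tgt (free_rep src tgt (rad_mult src tgt k)) (free_rep src tgt (vertex_ind v) :: ('v, 'a, 'k) rep) g"
      "hcomp (free_rep src tgt (rad_mult src tgt k)) g (rad_cover src tgt (rad_mult src tgt k)) = zero_hom"
      "\<not> (\<exists>h. is_hom src tgt (free_rep src tgt k) (free_rep src tgt (vertex_ind v) :: ('v, 'a, 'k) rep) h \<and>
        hcomp (free_rep src tgt k) h (rad_cover src tgt k) = g)"
    by blast
  then show ?thesis by (intro not_Ext_zeroI[OF R]) (simp_all add: numeral_2_eq_2)
qed

lemma two_elementsE:
  assumes "card {a::'a::finite. P a} = 2"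
  obtains a1 a2 where "a1 \<noteq> a2" "P a1" "P a2"
  using assms unfolding card_2_iff by auto

lemma no_elements:
  assumes "\<not> 1 \<le> card {a::'a::finite. P a}"
  shows "\<not> P a"
proof
  assume "P a"
  then have "card {a. P a} > 0" by (auto simp: card_gt_0_iff)
  with assms show False by simp
qed

lemma indeg_pos_if_outdeg_2:
  fixes C :: "('v, 'a::finite, 'k::field) rep set"
  assumes C: "n_cluster_tilting src tgt n C" and n: "2 \<le> n" and out: "outdeg src v = 2"
  shows "1 \<le> indeg tgt v"
proof (rule ccontr)
  assume "\<not> 1 \<le> indeg tgt v"
  then have "tgt a \<noteq> v" for a unfolding indeg_def by (rule no_elements)
  moreover obtain a1 a2 where "a1 \<noteq> a2" "src a1 = v" "src a2 = v" using out unfolding outdeg_def by (rule two_elementsE)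
  ultimately have "\<not> Ext_zero src tgt 1 (inj_rep src tgt v) (free_rep src tgt (vertex_ind v) :: ('v, 'a, 'k) rep)"
    by (rule not_Ext1_source_two_out)
  then show False using Ext_zero_inj_free_cluster_tilting[OF C, of 1] n by simp
qed

lemma outdeg_pos_if_indeg_2:
  fixes C :: "('v, 'a::finite, 'k::field) rep set"
  assumes C: "n_cluster_tilting src tgt n C" and n: "2 \<le> n" and inn: "indeg tgt v = 2"
  shows "1 \<le> outdeg src v"
proof (rule ccontr)
  assume "\<not> 1 \<le> outdeg src v"
  then have "src a \<noteq> v" for a unfolding outdeg_def by (rule no_elements)
  moreover obtain b1 b2 where "b1 \<noteq> b2" "tgt b1 = v" "tgt b2 = v" using inn unfolding indeg_def by (rule two_elementsE)
  ultimately have "\<not> Ext_zero src tgt 1 (inj_rep src tgt v) (free_rep src tgt (vertex_ind v) :: ('v, 'a, 'k) rep)"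
    by (rule not_Ext1_sink_two_in)
  then show False using Ext_zero_inj_free_cluster_tilting[OF C, of 1] n by simp
qed

lemma cluster_tilting_eq_2_if_degs_2:
  fixes C :: "('v, 'a::finite, 'k::field) rep set"
  assumes C: "n_cluster_tilting src tgt n C" and n: "2 \<le> n"
    and inn: "indeg tgt v = 2" and out: "outdeg src v = 2"
  shows "n = 2"
proof -
  obtain a1 a2 where a: "a1 \<noteq> a2" "src a1 = v" "src a2 = v" using out unfolding outdeg_def by (rule two_elementsE)
  obtain b1 b2 where b: "b1 \<noteq> b2" "tgt b1 = v" "tgt b2 = v" using inn unfolding indeg_def by (rule two_elementsE)
  have "\<not> Ext_zero src tgt 2 (inj_rep src tgt v) (free_rep src tgt (vertex_ind v) :: ('v, 'a, 'k) rep)"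
    using a b by (rule not_Ext2_two_in_two_out)
  then have "\<not> 2 < n" using Ext_zero_inj_free_cluster_tilting[OF C, where i=2 and v=v and m="vertex_ind v"] by auto
  then show ?thesis using n by linarith
qed

theorem lemma2p3:
  fixes src tgt :: "'a::finite \<Rightarrow> 'v::finite"
    and C :: "('v, 'a, 'k::field) rep set"
    and n :: nat and v :: 'v
  assumes "quiver_connected src tgt"
    and "2 \<le> n"
    and "n_cluster_tilting src tgt n C"
  shows "(outdeg src v = 2 \<longrightarrow> 1 \<le> indeg tgt v) \<and>
         (indeg tgt v = 2 \<longrightarrow> 1 \<le> outdeg src v) \<and>
         (indeg tgt v = 2 \<and> outdeg src v = 2 \<longrightarrow> n = 2)"
  using indeg_pos_if_outdeg_2[OF assms(3,2)] outdeg_pos_if_indeg_2[OF assms(3,2)]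
    cluster_tilting_eq_2_if_degs_2[OF assms(3,2)]
  by blast

end
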